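(* Let $\mathcal{C}$ be a skeletally small triangulated category and $H$ a $\mathbb{Q}$-subspace of $G(\mathcal{C})_{\mathbb{Q}}$. Then there exists a dense subcategory $\mathcal{D}$ of $\mathcal{C}$ such that the image of the (injective) natural map $G(\mathcal{D})_{\mathbb{Q}}\to G(\mathcal{C})_{\mathbb{Q}}$ equals $H$.
   Context: $G(\mathcal{C})$ is the Grothendieck group of the triangulated category $\mathcal{C}$ (free abelian group on isomorphism classes modulo $[V]=[U]+[W]$ for exact triangles $U\to V\to W\to U[1]$); $H_{\mathbb{Q}}=H\otimes_{\mathbb{Z}}\mathbb{Q}$. A dense subcategory is a triangulated subcategory $\mathcal{D}$ (full, closed under $[\pm1]$, isomorphisms and cones) such that for every $U\in\mathcal{C}$ there is $V$ with $U\oplus V\in\mathcal{D}$. *)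

theory Defs
  imports Complex_Main
begin

record ('o, 'm) tcat =
  Ob    :: "'o set"
  Hom   :: "'o \<Rightarrow> 'o \<Rightarrow> 'm set"
  comp  :: "'m \<Rightarrow> 'm \<Rightarrow> 'm"          (* comp g f = g o f *)
  idm   :: "'o \<Rightarrow> 'm"
  madd  :: "'m \<Rightarrow> 'm \<Rightarrow> 'm"
  mneg  :: "'m \<Rightarrow> 'm"
  mzero :: "'o \<Rightarrow> 'o \<Rightarrow> 'm"
  ShO   :: "'o \<Rightarrow> 'o"
  ShM   :: "'m \<Rightarrow> 'm"
  Tri   :: "('o \<times> 'o \<times> 'o \<times> 'm \<times> 'm \<times> 'm) set"

definition category :: "('o, 'm, 'x) tcat_scheme \<Rightarrow> bool" where
  "category C \<longleftrightarrow>
     (\<forall>a b f. f \<in> Hom C a b \<longrightarrow> a \<in> Ob C \<and> b \<in> Ob C) \<and>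
     (\<forall>a b a' b' f. f \<in> Hom C a b \<longrightarrow> f \<in> Hom C a' b' \<longrightarrow> a = a' \<and> b = b') \<and>
     (\<forall>a \<in> Ob C. idm C a \<in> Hom C a a) \<and>
     (\<forall>a b c f g. f \<in> Hom C a b \<longrightarrow> g \<in> Hom C b c \<longrightarrow> comp C g f \<in> Hom C a c) \<and>
     (\<forall>a b c d f g h. f \<in> Hom C a b \<longrightarrow> g \<in> Hom C b c \<longrightarrow> h \<in> Hom C c d \<longrightarrow>
         comp C h (comp C g f) = comp C (comp C h g) f) \<and>
     (\<forall>a b f. f \<in> Hom C a b \<longrightarrow> comp C f (idm C a) = f \<and> comp C (idm C b) f = f)"

definition preadditive :: "('o, 'm, 'x) tcat_scheme \<Rightarrow> bool" where
  "preadditive C \<longleftrightarrow>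
     (\<forall>a \<in> Ob C. \<forall>b \<in> Ob C.
        mzero C a b \<in> Hom C a b \<and>
        (\<forall>f \<in> Hom C a b. \<forall>g \<in> Hom C a b. madd C f g \<in> Hom C a b \<and> madd C f g = madd C g f) \<and>
        (\<forall>f \<in> Hom C a b. \<forall>g \<in> Hom C a b. \<forall>h \<in> Hom C a b.
            madd C (madd C f g) h = madd C f (madd C g h)) \<and>
        (\<forall>f \<in> Hom C a b. madd C f (mzero C a b) = f \<and> mneg C f \<in> Hom C a b \<and>
            madd C f (mneg C f) = mzero C a b)) \<and>
     (\<forall>a b c f f' g. f \<in> Hom C a b \<longrightarrow> f' \<in> Hom C a b \<longrightarrow> g \<in> Hom C b c \<longrightarrow>
         comp C g (madd C f f') = madd C (comp C g f) (comp C g f')) \<and>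
     (\<forall>a b c f g g'. f \<in> Hom C a b \<longrightarrow> g \<in> Hom C b c \<longrightarrow> g' \<in> Hom C b c \<longrightarrow>
         comp C (madd C g g') f = madd C (comp C g f) (comp C g' f))"

definition is_iso :: "('o, 'm, 'x) tcat_scheme \<Rightarrow> 'm \<Rightarrow> 'o \<Rightarrow> 'o \<Rightarrow> bool" where
  "is_iso C f a b \<longleftrightarrow> f \<in> Hom C a b \<and>
     (\<exists>g \<in> Hom C b a. comp C g f = idm C a \<and> comp C f g = idm C b)"

definition isomorphic :: "('o, 'm, 'x) tcat_scheme \<Rightarrow> 'o \<Rightarrow> 'o \<Rightarrow> bool" where
  "isomorphic C a b \<longleftrightarrow> (\<exists>f. is_iso C f a b)"

definition zero_object :: "('o, 'm, 'x) tcat_scheme \<Rightarrow> 'o \<Rightarrow> bool" where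
  "zero_object C z \<longleftrightarrow> z \<in> Ob C \<and>
     (\<forall>a \<in> Ob C. (\<exists>!f. f \<in> Hom C z a) \<and> (\<exists>!f. f \<in> Hom C a z))"

definition is_biproduct :: "('o, 'm, 'x) tcat_scheme \<Rightarrow> 'o \<Rightarrow> 'o \<Rightarrow> 'o \<Rightarrow> bool" where
  "is_biproduct C a b s \<longleftrightarrow> a \<in> Ob C \<and> b \<in> Ob C \<and> s \<in> Ob C \<and>
     (\<exists>i1 \<in> Hom C a s. \<exists>i2 \<in> Hom C b s. \<exists>p1 \<in> Hom C s a. \<exists>p2 \<in> Hom C s b.
        comp C p1 i1 = idm C a \<and> comp C p2 i2 = idm C b \<and>
        comp C p2 i1 = mzero C a b \<and> comp C p1 i2 = mzero C b a \<and>
        madd C (comp C i1 p1) (comp C i2 p2) = idm C s)"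

definition additive :: "('o, 'm, 'x) tcat_scheme \<Rightarrow> bool" where
  "additive C \<longleftrightarrow> category C \<and> preadditive C \<and> (\<exists>z. zero_object C z) \<and>
     (\<forall>a \<in> Ob C. \<forall>b \<in> Ob C. \<exists>s. is_biproduct C a b s)"

definition shift_ok :: "('o, 'm, 'x) tcat_scheme \<Rightarrow> bool" where
  "shift_ok C \<longleftrightarrow>
     (\<forall>a \<in> Ob C. ShO C a \<in> Ob C \<and> ShM C (idm C a) = idm C (ShO C a)) \<and>
     (\<forall>a b f. f \<in> Hom C a b \<longrightarrow> ShM C f \<in> Hom C (ShO C a) (ShO C b)) \<and>
     (\<forall>a b c f g. f \<in> Hom C a b \<longrightarrow> g \<in> Hom C b c \<longrightarrow>
         ShM C (comp C g f) = comp C (ShM C g) (ShM C f)) \<and>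
     (\<forall>a b f g. f \<in> Hom C a b \<longrightarrow> g \<in> Hom C a b \<longrightarrow>
         ShM C (madd C f g) = madd C (ShM C f) (ShM C g)) \<and>
     (\<forall>a \<in> Ob C. \<forall>b \<in> Ob C. bij_betw (ShM C) (Hom C a b) (Hom C (ShO C a) (ShO C b))) \<and>
     (\<forall>b \<in> Ob C. \<exists>a \<in> Ob C. isomorphic C (ShO C a) b)"

definition is_triangle :: "('o, 'm, 'x) tcat_scheme \<Rightarrow> 'o \<times> 'o \<times> 'o \<times> 'm \<times> 'm \<times> 'm \<Rightarrow> bool" where
  "is_triangle C T \<longleftrightarrow> (case T of (X, Y, Z, f, g, h) \<Rightarrow>
      f \<in> Hom C X Y \<and> g \<in> Hom C Y Z \<and> h \<in> Hom C Z (ShO C X))"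

definition tri_morph :: "('o, 'm, 'x) tcat_scheme \<Rightarrow> 'o \<times> 'o \<times> 'o \<times> 'm \<times> 'm \<times> 'm \<Rightarrow>
     'o \<times> 'o \<times> 'o \<times> 'm \<times> 'm \<times> 'm \<Rightarrow> 'm \<Rightarrow> 'm \<Rightarrow> 'm \<Rightarrow> bool" where
  "tri_morph C T T' u v w \<longleftrightarrow> (case T of (X, Y, Z, f, g, h) \<Rightarrow> case T' of (X', Y', Z', f', g', h') \<Rightarrow>
      u \<in> Hom C X X' \<and> v \<in> Hom C Y Y' \<and> w \<in> Hom C Z Z' \<and>
      comp C v f = comp C f' u \<and> comp C w g = comp C g' v \<and>
      comp C (ShM C u) h = comp C h' w)"

definition tri_iso :: "('o, 'm, 'x) tcat_scheme \<Rightarrow> 'o \<times> 'o \<times> 'o \<times> 'm \<times> 'm \<times> 'm \<Rightarrow>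
     'o \<times> 'o \<times> 'o \<times> 'm \<times> 'm \<times> 'm \<Rightarrow> bool" where
  "tri_iso C T T' \<longleftrightarrow> (case T of (X, Y, Z, f, g, h) \<Rightarrow> case T' of (X', Y', Z', f', g', h') \<Rightarrow>
      (\<exists>u v w. tri_morph C T T' u v w \<and> is_iso C u X X' \<and> is_iso C v Y Y' \<and> is_iso C w Z Z'))"

text \<open>Triangulated category: axioms TR1--TR4 (TR4 = octahedral axiom, Stacks 05QK).\<close>
definition triangulated :: "('o, 'm, 'x) tcat_scheme \<Rightarrow> bool" where
  "triangulated C \<longleftrightarrow> additive C \<and> shift_ok C \<and>
     (\<forall>T \<in> Tri C. is_triangle C T) \<and>
     \<comment> \<open>TR1\<close>
     (\<forall>T T'. T \<in> Tri C \<longrightarrow> is_triangle C T' \<longrightarrow> tri_iso C T T' \<longrightarrow> T' \<in> Tri C) \<and>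
     (\<forall>X \<in> Ob C. \<forall>Z. zero_object C Z \<longrightarrow>
         (X, X, Z, idm C X, mzero C X Z, mzero C Z (ShO C X)) \<in> Tri C) \<and>
     (\<forall>X Y f. f \<in> Hom C X Y \<longrightarrow> (\<exists>Z g h. (X, Y, Z, f, g, h) \<in> Tri C)) \<and>
     \<comment> \<open>TR2\<close>
     (\<forall>X Y Z f g h. is_triangle C (X, Y, Z, f, g, h) \<longrightarrow>
        ((X, Y, Z, f, g, h) \<in> Tri C \<longleftrightarrow> (Y, Z, ShO C X, g, h, mneg C (ShM C f)) \<in> Tri C)) \<and>
     \<comment> \<open>TR3\<close>
     (\<forall>X Y Z f g h X' Y' Z' f' g' h' u v.
        (X, Y, Z, f, g, h) \<in> Tri C \<longrightarrow> (X', Y', Z', f', g', h') \<in> Tri C \<longrightarrow>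
        u \<in> Hom C X X' \<longrightarrow> v \<in> Hom C Y Y' \<longrightarrow> comp C v f = comp C f' u \<longrightarrow>
        (\<exists>w. tri_morph C (X, Y, Z, f, g, h) (X', Y', Z', f', g', h') u v w)) \<and>
     \<comment> \<open>TR4\<close>
     (\<forall>X Y Z f g Q1 p1 d1 Q2 p2 d2 Q3 p3 d3.
        f \<in> Hom C X Y \<longrightarrow> g \<in> Hom C Y Z \<longrightarrow>
        (X, Y, Q1, f, p1, d1) \<in> Tri C \<longrightarrow>
        (X, Z, Q2, comp C g f, p2, d2) \<in> Tri C \<longrightarrow>
        (Y, Z, Q3, g, p3, d3) \<in> Tri C \<longrightarrow>
        (\<exists>a b. a \<in> Hom C Q1 Q2 \<and> b \<in> Hom C Q2 Q3 \<and>
           (Q1, Q2, Q3, a, b, comp C (ShM C p1) d3) \<in> Tri C \<and>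
           comp C a p1 = comp C p2 g \<and> comp C d2 a = d1 \<and>
           comp C b p2 = p3 \<and> comp C d3 b = comp C (ShM C f) d2))"

definition triangulated_subcategory :: "('o, 'm, 'x) tcat_scheme \<Rightarrow> 'o set \<Rightarrow> bool" where
  "triangulated_subcategory C D \<longleftrightarrow> D \<subseteq> Ob C \<and> D \<noteq> {} \<and>
     (\<forall>X \<in> D. \<forall>Y. isomorphic C X Y \<longrightarrow> Y \<in> D) \<and>
     (\<forall>X \<in> D. ShO C X \<in> D) \<and>
     (\<forall>X \<in> Ob C. ShO C X \<in> D \<longrightarrow> X \<in> D) \<and>
     (\<forall>X Y Z f g h. (X, Y, Z, f, g, h) \<in> Tri C \<longrightarrow> X \<in> D \<longrightarrow> Y \<in> D \<longrightarrow> Z \<in> D)"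

definition dense_subcategory :: "('o, 'm, 'x) tcat_scheme \<Rightarrow> 'o set \<Rightarrow> bool" where
  "dense_subcategory C D \<longleftrightarrow> triangulated_subcategory C D \<and>
     (\<forall>U \<in> Ob C. \<exists>V \<in> Ob C. \<exists>S. is_biproduct C U V S \<and> S \<in> D)"

text \<open>G(S) \<otimes> Q is presented as the Q-vector space of finitely supported functions
  S \<rightarrow> Q (free Q-vector space on objects) modulo the span of the relations
  [X] - [X'] for isomorphic X, X' and [Y] - [X] - [Z] for exact triangles in S.
  Elements are cosets (sets of representatives).\<close>

definition fsupp :: "'o set \<Rightarrow> ('o \<Rightarrow> rat) set" where
  "fsupp S = {v. finite {x. v x \<noteq> 0} \<and> {x. v x \<noteq> 0} \<subseteq> S}"

definition delta :: "'o \<Rightarrow> 'o \<Rightarrow> rat" where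
  "delta x = (\<lambda>y. if y = x then 1 else 0)"

definition qspan :: "('o \<Rightarrow> rat) set \<Rightarrow> ('o \<Rightarrow> rat) set" where
  "qspan A = {v. \<exists>B c. finite B \<and> B \<subseteq> A \<and> v = (\<lambda>y. \<Sum>b\<in>B. c b * b y)}"

definition groth_rels :: "('o, 'm, 'x) tcat_scheme \<Rightarrow> 'o set \<Rightarrow> ('o \<Rightarrow> rat) set" where
  "groth_rels C S =
     {(\<lambda>y. delta Y y - delta X y - delta Z y) | X Y Z f g h.
         (X, Y, Z, f, g, h) \<in> Tri C \<and> X \<in> S \<and> Y \<in> S \<and> Z \<in> S} \<union>
     {(\<lambda>y. delta X y - delta X' y) | X X'. X \<in> S \<and> X' \<in> S \<and> isomorphic C X X'}"

definition groth_coset :: "('o, 'm, 'x) tcat_scheme \<Rightarrow> 'o set \<Rightarrow> ('o \<Rightarrow> rat) \<Rightarrow> ('o \<Rightarrow> rat) set" where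
  "groth_coset C S v = {w \<in> fsupp S. (\<lambda>y. w y - v y) \<in> qspan (groth_rels C S)}"

definition GQ :: "('o, 'm, 'x) tcat_scheme \<Rightarrow> 'o set \<Rightarrow> ('o \<Rightarrow> rat) set set" where
  "GQ C S = groth_coset C S ` fsupp S"

definition gq_add :: "('o, 'm, 'x) tcat_scheme \<Rightarrow> 'o set \<Rightarrow> ('o \<Rightarrow> rat) set \<Rightarrow> ('o \<Rightarrow> rat) set \<Rightarrow> ('o \<Rightarrow> rat) set" where
  "gq_add C S K L = groth_coset C S (\<lambda>y. (SOME v. v \<in> K) y + (SOME w. w \<in> L) y)"

definition gq_smult :: "('o, 'm, 'x) tcat_scheme \<Rightarrow> 'o set \<Rightarrow> rat \<Rightarrow> ('o \<Rightarrow> rat) set \<Rightarrow> ('o \<Rightarrow> rat) set" where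
  "gq_smult C S c K = groth_coset C S (\<lambda>y. c * (SOME v. v \<in> K) y)"

definition gq_subspace :: "('o, 'm, 'x) tcat_scheme \<Rightarrow> 'o set \<Rightarrow> ('o \<Rightarrow> rat) set set \<Rightarrow> bool" where
  "gq_subspace C S H \<longleftrightarrow> H \<subseteq> GQ C S \<and> groth_coset C S (\<lambda>y. 0) \<in> H \<and>
     (\<forall>K \<in> H. \<forall>L \<in> H. gq_add C S K L \<in> H) \<and>
     (\<forall>c. \<forall>K \<in> H. gq_smult C S c K \<in> H)"

definition gq_incl :: "('o, 'm, 'x) tcat_scheme \<Rightarrow> 'o set \<Rightarrow> ('o \<Rightarrow> rat) set \<Rightarrow> ('o \<Rightarrow> rat) set" where
  "gq_incl C D K = groth_coset C (Ob C) (SOME v. v \<in> K)"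

end

theory Submission
  imports Defs "HOL-Library.Function_Algebras"
begin

text \<open>
  Take \<open>D\<close> to be the objects \<open>X\<close> with \<open>[X] \<in> H\<close>. Since \<open>[U[1]] = -[U]\<close>, every \<open>U \<oplus> U[1]\<close> has
  class \<open>0\<close> and lies in \<open>D\<close>, so \<open>D\<close> is dense; it is a triangulated subcategory because \<open>H\<close> is a
  subspace.

  For \<open>v \<in> H\<close> clear denominators: \<open>n v = [L\<^sub>1] - [L\<^sub>2]\<close> for finite lists of objects, and this is
  the class of \<open>Y = \<Oplus>L\<^sub>1 \<oplus> (\<Oplus>L\<^sub>2)[1]\<close>; so \<open>Y \<in> D\<close> and \<open>v = [Y]/n\<close> lies in the image of \<open>G(D)\<^sub>\<rat>\<close>.

  For injectivity, the octahedral axiom enlarges a triangle \<open>X \<rightarrow> Y \<rightarrow> Z\<close> of \<open>C\<close> to a triangle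
  \<open>X \<oplus> X[1] \<rightarrow> Y \<oplus> Q[1] \<rightarrow> Q \<oplus> Q[1]\<close> with \<open>Q \<cong> X[2] \<oplus> Z\<close>, all of whose terms lie in \<open>D\<close>.
  Hence every relation of \<open>G(C)\<^sub>\<rat>\<close> lies in the span of the relations of \<open>G(D)\<^sub>\<rat>\<close> and the
  biproduct relations \<open>[A] + [B] - [A \<oplus> B]\<close>. A combination of the latter is, up to a positive integer
  factor, \<open>[L\<^sub>1] - [L\<^sub>2]\<close> with \<open>\<Oplus>L\<^sub>1 \<cong> \<Oplus>L\<^sub>2\<close>; if it is supported on \<open>D\<close>, the summands
  outside \<open>D\<close> agree on both sides, and adding \<open>W[1]\<close> for their sum \<open>W\<close> turns the isomorphism into
  a relation of \<open>G(D)\<^sub>\<rat>\<close>.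
\<close>

section \<open>Rational spans and finitely supported vectors\<close>

definition qscale :: "rat \<Rightarrow> ('o \<Rightarrow> rat) \<Rightarrow> 'o \<Rightarrow> rat" where
  "qscale c v = (\<lambda>y. c * v y)"

interpretation qvec: module qscale
  by standard (auto simp: qscale_def algebra_simps)

lemma sum_fun_apply: "sum f A y = (\<Sum>a\<in>A. f a y)"
  by (induct A rule: infinite_finite_induct) auto

lemma qspan_eq_span: "qspan A = qvec.span A"
  unfolding qspan_def qvec.span_explicit
  by (auto simp: sum_fun_apply qscale_def fun_eq_iff)

lemma qspan_zero: "(\<lambda>y. 0) \<in> qspan A"
  using qvec.span_zero[of A] by (simp add: qspan_eq_span zero_fun_def)

lemma qspan_base: "a \<in> A \<Longrightarrow> a \<in> qspan A"
  by (simp add: qspan_eq_span qvec.span_base)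

lemma qspan_mono: "A \<subseteq> B \<Longrightarrow> qspan A \<subseteq> qspan B"
  by (simp add: qspan_eq_span qvec.span_mono)

lemma qspan_subset: "A \<subseteq> qspan B \<Longrightarrow> qspan A \<subseteq> qspan B"
  by (simp add: qspan_eq_span qvec.span_minimal qvec.subspace_span)

lemma qspan_add: "u \<in> qspan A \<Longrightarrow> v \<in> qspan A \<Longrightarrow> (\<lambda>y. u y + v y) \<in> qspan A"
  using qvec.span_add[of u A v] by (simp add: qspan_eq_span plus_fun_def)

lemma qspan_diff: "u \<in> qspan A \<Longrightarrow> v \<in> qspan A \<Longrightarrow> (\<lambda>y. u y - v y) \<in> qspan A"
  using qvec.span_diff[of u A v] by (simp add: qspan_eq_span fun_diff_def)

lemma qspan_scale: "u \<in> qspan A \<Longrightarrow> (\<lambda>y. c * u y) \<in> qspan A"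
  using qvec.span_scale[of u A c] by (simp add: qspan_eq_span qscale_def)

lemma qspan_neg: "u \<in> qspan A \<Longrightarrow> (\<lambda>y. - u y) \<in> qspan A"
  using qspan_scale[of u A "-1"] by simp

lemma qspan_sum: "(\<And>x. x \<in> F \<Longrightarrow> f x \<in> qspan A) \<Longrightarrow> (\<lambda>y. \<Sum>x\<in>F. f x y) \<in> qspan A"
  using qvec.span_sum[of F f A] by (simp add: qspan_eq_span sum_fun_apply[symmetric] fun_eq_iff)

lemma qspan_Un:
  "v \<in> qspan (A \<union> B) \<Longrightarrow> \<exists>a b. a \<in> qspan A \<and> b \<in> qspan B \<and> v = (\<lambda>y. a y + b y)"
  unfolding qspan_eq_span qvec.span_Un by (auto simp: plus_fun_def)

lemma qspan_induct [consumes 1, case_names zero step]: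
  assumes "v \<in> qspan A" and "P (\<lambda>y. 0)"
    and "\<And>c a u. a \<in> A \<Longrightarrow> P u \<Longrightarrow> P (\<lambda>y. c * a y + u y)"
  shows "P v"
  using assms(1) unfolding qspan_eq_span
proof (induct rule: qvec.span_induct_alt)
  case base
  then show ?case using assms(2) by (simp add: zero_fun_def)
next
  case (step c x y)
  then show ?case using assms(3)[of x y c] by (simp add: qscale_def plus_fun_def)
qed

lemma fsupp_delta:
  assumes "x \<in> S"
  shows "delta x \<in> fsupp S"
proof -
  have "{y. delta x y \<noteq> 0} = {x}" by (auto simp: delta_def)
  then show ?thesis using assms unfolding fsupp_def by auto
qed

lemma fsupp_zero: "(\<lambda>y. 0) \<in> fsupp S"
  unfolding fsupp_def by auto

lemma fsupp_scale_add:
  assumes "a \<in> fsupp S" "u \<in> fsupp S"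
  shows "(\<lambda>y. c * a y + u y) \<in> fsupp S"
proof -
  have "{y. c * a y + u y \<noteq> 0} \<subseteq> {y. a y \<noteq> 0} \<union> {y. u y \<noteq> 0}" by auto
  then show ?thesis using assms unfolding fsupp_def by (auto intro: finite_subset)
qed

lemma fsupp_scale: "a \<in> fsupp S \<Longrightarrow> (\<lambda>y. c * a y) \<in> fsupp S"
  using fsupp_scale_add[of a S "\<lambda>y. 0" c] fsupp_zero[of S] by simp

lemma fsupp_diff: "a \<in> fsupp S \<Longrightarrow> u \<in> fsupp S \<Longrightarrow> (\<lambda>y. a y - u y) \<in> fsupp S"
  using fsupp_scale_add[of u S a "-1"] by simp

lemma fsupp_mono: "S \<subseteq> S' \<Longrightarrow> fsupp S \<subseteq> fsupp S'"
  unfolding fsupp_def by auto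

lemma qspan_fsupp: "A \<subseteq> fsupp S \<Longrightarrow> qspan A \<subseteq> fsupp S"
proof
  fix v assume A: "A \<subseteq> fsupp S" and v: "v \<in> qspan A"
  from v show "v \<in> fsupp S"
    by (induct rule: qspan_induct) (use A in \<open>auto intro: fsupp_zero fsupp_scale_add\<close>)
qed

lemma fsupp_eq_sum_delta: "v \<in> fsupp S \<Longrightarrow> v = (\<lambda>y. \<Sum>x | v x \<noteq> 0. v x * delta x y)"
proof
  fix y assume "v \<in> fsupp S"
  then have "finite {x. v x \<noteq> 0}" unfolding fsupp_def by auto
  then show "v y = (\<Sum>x | v x \<noteq> 0. v x * delta x y)"
    by (simp add: delta_def if_distrib sum.delta' cong: if_cong)
qed

lemma fsupp_in_qspanI:
  assumes v: "v \<in> fsupp S" and deltas: "\<And>x. x \<in> S \<Longrightarrow> delta x \<in> qspan A"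
  shows "v \<in> qspan A"
proof -
  have "(\<lambda>y. \<Sum>x | v x \<noteq> 0. v x * delta x y) \<in> qspan A"
  proof (rule qspan_sum)
    fix x assume "x \<in> {x. v x \<noteq> 0}"
    then have "x \<in> S" using v unfolding fsupp_def by auto
    then show "(\<lambda>y. v x * delta x y) \<in> qspan A" using deltas qspan_scale by blast
  qed
  then show ?thesis using fsupp_eq_sum_delta[OF v] by simp
qed

lemma groth_rels_fsupp: "groth_rels C S \<subseteq> fsupp S"
  unfolding groth_rels_def by (auto intro!: fsupp_diff fsupp_delta)

lemma qspan_groth_rels_fsupp: "qspan (groth_rels C S) \<subseteq> fsupp S"
  using qspan_fsupp[OF groth_rels_fsupp] .

lemma groth_rels_mono: "S \<subseteq> S' \<Longrightarrow> groth_rels C S \<subseteq> groth_rels C S'"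
  unfolding groth_rels_def by blast

lemma groth_rels_TriI:
  "(X, Y, Z, f, g, h) \<in> Tri C \<Longrightarrow> X \<in> S \<Longrightarrow> Y \<in> S \<Longrightarrow> Z \<in> S \<Longrightarrow>
   (\<lambda>y. delta Y y - delta X y - delta Z y) \<in> groth_rels C S"
  unfolding groth_rels_def by blast

lemma groth_rels_isoI:
  "isomorphic C X X' \<Longrightarrow> X \<in> S \<Longrightarrow> X' \<in> S \<Longrightarrow> (\<lambda>y. delta X y - delta X' y) \<in> groth_rels C S"
  unfolding groth_rels_def by blast

lemma groth_coset_self: "v \<in> fsupp S \<Longrightarrow> v \<in> groth_coset C S v"
  unfolding groth_coset_def using qspan_zero by simp

lemma groth_coset_eqI:
  assumes "(\<lambda>y. v y - w y) \<in> qspan (groth_rels C S)"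
  shows "groth_coset C S v = groth_coset C S w"
proof -
  have "(\<lambda>y. u y - v y) \<in> qspan (groth_rels C S) \<longleftrightarrow> (\<lambda>y. u y - w y) \<in> qspan (groth_rels C S)" for u
    using qspan_add[OF _ assms, of "\<lambda>y. u y - v y"] qspan_diff[OF _ assms, of "\<lambda>y. u y - w y"]
    by auto
  then show ?thesis unfolding groth_coset_def by blast
qed

lemma groth_coset_eqD:
  "v \<in> fsupp S \<Longrightarrow> groth_coset C S v = groth_coset C S w \<Longrightarrow> (\<lambda>y. v y - w y) \<in> qspan (groth_rels C S)"
  using groth_coset_self[of v S C] unfolding groth_coset_def by auto

lemma groth_coset_some:
  "v \<in> fsupp S \<Longrightarrow> (\<lambda>y. (SOME u. u \<in> groth_coset C S v) y - v y) \<in> qspan (groth_rels C S)"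
  using someI[of "\<lambda>u. u \<in> groth_coset C S v", OF groth_coset_self] unfolding groth_coset_def by auto

lemma gq_add_groth_coset:
  assumes "v \<in> fsupp S" "w \<in> fsupp S"
  shows "gq_add C S (groth_coset C S v) (groth_coset C S w) = groth_coset C S (\<lambda>y. v y + w y)"
  unfolding gq_add_def
  by (rule groth_coset_eqI)
    (use qspan_add[OF groth_coset_some[OF assms(1)] groth_coset_some[OF assms(2)]] in
      \<open>simp add: algebra_simps\<close>)

lemma gq_smult_groth_coset:
  assumes "v \<in> fsupp S"
  shows "gq_smult C S c (groth_coset C S v) = groth_coset C S (\<lambda>y. c * v y)"
  unfolding gq_smult_def
  by (rule groth_coset_eqI)
    (use qspan_scale[OF groth_coset_some[OF assms], where c = c] in \<open>simp add: algebra_simps\<close>)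

lemma gq_incl_groth_coset:
  assumes "D \<subseteq> Ob C" "v \<in> fsupp D"
  shows "gq_incl C D (groth_coset C D v) = groth_coset C (Ob C) v"
  unfolding gq_incl_def
proof (rule groth_coset_eqI)
  show "(\<lambda>y. (SOME u. u \<in> groth_coset C D v) y - v y) \<in> qspan (groth_rels C (Ob C))"
    using groth_coset_some[OF assms(2)] qspan_mono[OF groth_rels_mono[OF assms(1)]] by blast
qed

definition count_vec :: "'o list \<Rightarrow> 'o \<Rightarrow> rat" where
  "count_vec L y = of_nat (count_list L y)"

lemma count_vec_Nil [simp]: "count_vec [] y = 0"
  by (simp add: count_vec_def)

lemma count_vec_Cons [simp]: "count_vec (x # L) y = delta x y + count_vec L y"
  by (simp add: count_vec_def delta_def)

lemma count_vec_append [simp]: "count_vec (L @ M) y = count_vec L y + count_vec M y"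
  by (simp add: count_vec_def)

lemma count_list_filter: "count_list (filter P xs) y = (if P y then count_list xs y else 0)"
  by (induct xs) auto

lemma count_vec_concat_replicate:
  "count_vec (concat (replicate k L)) y = of_nat k * count_vec L y"
  by (induct k) (simp_all add: algebra_simps)

lemma qspan_count_vec_difference:
  fixes P :: "'o list \<Rightarrow> 'o list \<Rightarrow> bool"
  assumes "u \<in> qspan A"
    and P_Nil: "P [] []"
    and P_append: "\<And>L1 L2 M1 M2. P L1 L2 \<Longrightarrow> P M1 M2 \<Longrightarrow> P (L1 @ M1) (L2 @ M2)"
    and P_swap: "\<And>L1 L2. P L1 L2 \<Longrightarrow> P L2 L1"
    and generators: "\<And>a. a \<in> A \<Longrightarrow> \<exists>M1 M2. P M1 M2 \<and> a = (\<lambda>y. count_vec M1 y - count_vec M2 y)"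
  shows "\<exists>n > 0. \<exists>L1 L2. P L1 L2 \<and> (\<forall>y. of_nat n * u y = count_vec L1 y - count_vec L2 y)"
  using assms(1)
proof (induct rule: qspan_induct)
  case zero
  show ?case using P_Nil by (intro exI[of _ 1]) auto
next
  case (step c a u)
  have P_replicate: "P (concat (replicate k L1)) (concat (replicate k L2))" if "P L1 L2" for k L1 L2
    by (induct k) (simp_all add: P_Nil P_append that)
  obtain n L1 L2 where n: "n > 0" "P L1 L2"
    and u: "\<And>y. of_nat n * u y = count_vec L1 y - count_vec L2 y"
    using step(2) by blast
  obtain p q where pq: "quotient_of c = (p, q)" by (cases "quotient_of c")
  have q: "q > 0" and c: "c = of_int p / of_int q"
    using quotient_of_denom_pos[OF pq] quotient_of_div[OF pq] by auto
  obtain M1 M2 where M: "P M1 M2" and a: "a = (\<lambda>y. count_vec M1 y - count_vec M2 y)"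
    using generators[OF step(1)] by blast
  \<comment> \<open>absorb the sign of the numerator \<open>p\<close> into the order of the lists\<close>
  obtain N1 N2 where N: "P N1 N2"
    and pa: "\<And>y. of_int p * a y = of_nat (nat \<bar>p\<bar>) * (count_vec N1 y - count_vec N2 y)"
  proof (cases "p \<ge> 0")
    case True
    then show ?thesis using that[OF M] a by simp
  next
    case False
    then show ?thesis using that[OF P_swap[OF M]] a by (simp add: algebra_simps)
  qed
  define rep where "rep k L = concat (replicate k L)" for k and L :: "'o list"
  define L1' where "L1' = rep (nat q) L1 @ rep (nat \<bar>p\<bar> * n) N1"
  define L2' where "L2' = rep (nat q) L2 @ rep (nat \<bar>p\<bar> * n) N2"
  have "of_nat (nat q * n) * (c * a y + u y) = count_vec L1' y - count_vec L2' y" for y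
  proof -
    have "of_nat (nat q * n) * (c * a y + u y) = of_nat n * (of_int p * a y) + of_int q * (of_nat n * u y)"
      using q c by (simp add: field_simps)
    also have "\<dots> = of_nat (nat \<bar>p\<bar> * n) * (count_vec N1 y - count_vec N2 y)
        + of_nat (nat q) * (count_vec L1 y - count_vec L2 y)"
      using q by (simp add: pa u)
    also have "\<dots> = count_vec L1' y - count_vec L2' y"
      unfolding L1'_def L2'_def rep_def by (simp add: count_vec_concat_replicate algebra_simps)
    finally show ?thesis .
  qed
  moreover have "P L1' L2'" unfolding L1'_def L2'_def rep_def using n N P_replicate P_append by blast
  moreover have "nat q * n > 0" using q n by simp
  ultimately show ?case by blast
qed

section \<open>Additive categories with a shift\<close>

locale triangulated_category =
  fixes C :: "('o, 'm) tcat"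
  assumes triangulated: "triangulated C"
begin

lemma additive_C: "additive C"
  using triangulated unfolding triangulated_def by blast

lemma category_C: "category C"
  using additive_C unfolding additive_def by blast

lemma preadditive_C: "preadditive C"
  using additive_C unfolding additive_def by blast

lemma shift_ok_C: "shift_ok C"
  using triangulated unfolding triangulated_def by blast

definition Arr :: "'m \<Rightarrow> bool" where
  "Arr f \<longleftrightarrow> (\<exists>a b. f \<in> Hom C a b)"

definition dom :: "'m \<Rightarrow> 'o" where
  "dom f = (THE a. \<exists>b. f \<in> Hom C a b)"

definition cod :: "'m \<Rightarrow> 'o" where
  "cod f = (THE b. \<exists>a. f \<in> Hom C a b)"

lemma hom_unique: "f \<in> Hom C a b \<Longrightarrow> f \<in> Hom C a' b' \<Longrightarrow> a = a' \<and> b = b'"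
  using category_C unfolding category_def by (elim conjE) blast

lemma hom_obs: "f \<in> Hom C a b \<Longrightarrow> a \<in> Ob C \<and> b \<in> Ob C"
  using category_C unfolding category_def by (elim conjE) blast

lemma idm_hom: "a \<in> Ob C \<Longrightarrow> idm C a \<in> Hom C a a"
  using category_C unfolding category_def by (elim conjE) blast

lemma comp_hom: "f \<in> Hom C a b \<Longrightarrow> g \<in> Hom C b c \<Longrightarrow> comp C g f \<in> Hom C a c"
  using category_C unfolding category_def by (elim conjE) blast

lemma comp_assoc_hom: "f \<in> Hom C a b \<Longrightarrow> g \<in> Hom C b c \<Longrightarrow> h \<in> Hom C c d \<Longrightarrow>
   comp C h (comp C g f) = comp C (comp C h g) f"
  using category_C unfolding category_def by (elim conjE) auto

lemma comp_idm_hom: "f \<in> Hom C a b \<Longrightarrow> comp C f (idm C a) = f \<and> comp C (idm C b) f = f"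
  using category_C unfolding category_def by (elim conjE) auto

lemma hom_iff: "f \<in> Hom C a b \<longleftrightarrow> Arr f \<and> dom f = a \<and> cod f = b"
proof -
  have "dom f = a \<and> cod f = b" if "f \<in> Hom C a b" for a b
    unfolding dom_def cod_def using that hom_unique by (blast intro: the_equality)
  then show ?thesis unfolding Arr_def by blast
qed

lemma arr_in_hom: "Arr f \<Longrightarrow> f \<in> Hom C (dom f) (cod f)"
  by (simp add: hom_iff)

lemma ob_dom [simp]: "Arr f \<Longrightarrow> dom f \<in> Ob C"
  and ob_cod [simp]: "Arr f \<Longrightarrow> cod f \<in> Ob C"
  using hom_obs[OF arr_in_hom] by blast+

lemma arr_comp [simp]: "Arr f \<Longrightarrow> Arr g \<Longrightarrow> cod f = dom g \<Longrightarrow> Arr (comp C g f)"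
  and dom_comp [simp]: "Arr f \<Longrightarrow> Arr g \<Longrightarrow> cod f = dom g \<Longrightarrow> dom (comp C g f) = dom f"
  and cod_comp [simp]: "Arr f \<Longrightarrow> Arr g \<Longrightarrow> cod f = dom g \<Longrightarrow> cod (comp C g f) = cod g"
  using comp_hom[of f "dom f" "cod f" g "cod g"] by (auto simp: hom_iff)

lemma arr_idm [simp]: "a \<in> Ob C \<Longrightarrow> Arr (idm C a)"
  and dom_idm [simp]: "a \<in> Ob C \<Longrightarrow> dom (idm C a) = a"
  and cod_idm [simp]: "a \<in> Ob C \<Longrightarrow> cod (idm C a) = a"
  using idm_hom by (auto simp: hom_iff)

lemma comp_assoc:
  "Arr f \<Longrightarrow> Arr g \<Longrightarrow> Arr h \<Longrightarrow> cod f = dom g \<Longrightarrow> cod g = dom h \<Longrightarrow>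
   comp C h (comp C g f) = comp C (comp C h g) f"
  using comp_assoc_hom[OF arr_in_hom[of f] _ arr_in_hom[of h]] arr_in_hom[of g] by simp

lemma comp_idm_left [simp]: "Arr f \<Longrightarrow> cod f = b \<Longrightarrow> comp C (idm C b) f = f"
  and comp_idm_right [simp]: "Arr f \<Longrightarrow> dom f = a \<Longrightarrow> comp C f (idm C a) = f"
  using comp_idm_hom[OF arr_in_hom[of f]] by blast+

lemma mzero_hom: "a \<in> Ob C \<Longrightarrow> b \<in> Ob C \<Longrightarrow> mzero C a b \<in> Hom C a b"
  using preadditive_C unfolding preadditive_def by (elim conjE) blast

lemma comp_madd_hom_right: "f \<in> Hom C a b \<Longrightarrow> f' \<in> Hom C a b \<Longrightarrow> g \<in> Hom C b c \<Longrightarrow>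
   comp C g (madd C f f') = madd C (comp C g f) (comp C g f')"
  using preadditive_C unfolding preadditive_def by (elim conjE) blast

lemma comp_madd_hom_left: "f \<in> Hom C a b \<Longrightarrow> g \<in> Hom C b c \<Longrightarrow> g' \<in> Hom C b c \<Longrightarrow>
   comp C (madd C g g') f = madd C (comp C g f) (comp C g' f)"
  using preadditive_C unfolding preadditive_def by (elim conjE) blast

lemma hom_group_laws:
  assumes "f \<in> Hom C a b" "g \<in> Hom C a b" "h \<in> Hom C a b"
  shows "madd C f g \<in> Hom C a b" "mneg C f \<in> Hom C a b"
    "madd C f g = madd C g f" "madd C (madd C f g) h = madd C f (madd C g h)"
    "madd C f (mzero C a b) = f" "madd C f (mneg C f) = mzero C a b"
proof -
  have "a \<in> Ob C" "b \<in> Ob C" using assms(1) hom_obs by auto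
  then have "\<forall>f \<in> Hom C a b. \<forall>g \<in> Hom C a b. \<forall>h \<in> Hom C a b.
      madd C f g \<in> Hom C a b \<and> mneg C f \<in> Hom C a b \<and>
      madd C f g = madd C g f \<and> madd C (madd C f g) h = madd C f (madd C g h) \<and>
      madd C f (mzero C a b) = f \<and> madd C f (mneg C f) = mzero C a b"
    using preadditive_C unfolding preadditive_def by (elim conjE) blast
  with assms show
    "madd C f g \<in> Hom C a b" "mneg C f \<in> Hom C a b"
    "madd C f g = madd C g f" "madd C (madd C f g) h = madd C f (madd C g h)"
    "madd C f (mzero C a b) = f" "madd C f (mneg C f) = mzero C a b"
    by blast+
qed

lemma arr_mzero [simp]: "a \<in> Ob C \<Longrightarrow> b \<in> Ob C \<Longrightarrow> Arr (mzero C a b)"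
  and dom_mzero [simp]: "a \<in> Ob C \<Longrightarrow> b \<in> Ob C \<Longrightarrow> dom (mzero C a b) = a"
  and cod_mzero [simp]: "a \<in> Ob C \<Longrightarrow> b \<in> Ob C \<Longrightarrow> cod (mzero C a b) = b"
  using mzero_hom by (auto simp: hom_iff)

lemma arr_madd [simp]:
    "Arr f \<Longrightarrow> Arr g \<Longrightarrow> dom g = dom f \<Longrightarrow> cod g = cod f \<Longrightarrow> Arr (madd C f g)"
  and dom_madd [simp]:
    "Arr f \<Longrightarrow> Arr g \<Longrightarrow> dom g = dom f \<Longrightarrow> cod g = cod f \<Longrightarrow> dom (madd C f g) = dom f"
  and cod_madd [simp]:
    "Arr f \<Longrightarrow> Arr g \<Longrightarrow> dom g = dom f \<Longrightarrow> cod g = cod f \<Longrightarrow> cod (madd C f g) = cod f"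
  using hom_group_laws(1)[of f "dom f" "cod f" g] by (auto simp: hom_iff)

lemma arr_mneg [simp]: "Arr f \<Longrightarrow> Arr (mneg C f)"
  and dom_mneg [simp]: "Arr f \<Longrightarrow> dom (mneg C f) = dom f"
  and cod_mneg [simp]: "Arr f \<Longrightarrow> cod (mneg C f) = cod f"
  using hom_group_laws(2)[of f "dom f" "cod f" f f] by (auto simp: hom_iff)

lemma madd_comm:
  "Arr f \<Longrightarrow> Arr g \<Longrightarrow> dom g = dom f \<Longrightarrow> cod g = cod f \<Longrightarrow> madd C f g = madd C g f"
  using hom_group_laws(3)[OF arr_in_hom[of f], of g g] arr_in_hom[of g] by simp

lemma madd_assoc:
  "Arr f \<Longrightarrow> Arr g \<Longrightarrow> Arr h \<Longrightarrow> dom g = dom f \<Longrightarrow> cod g = cod f \<Longrightarrow>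
   dom h = dom f \<Longrightarrow> cod h = cod f \<Longrightarrow> madd C (madd C f g) h = madd C f (madd C g h)"
  using hom_group_laws(4)[OF arr_in_hom[of f], of g h] arr_in_hom[of g] arr_in_hom[of h] by simp

lemma madd_mzero_right [simp]: "Arr f \<Longrightarrow> dom f = a \<Longrightarrow> cod f = b \<Longrightarrow> madd C f (mzero C a b) = f"
  and madd_mneg_right [simp]: "Arr f \<Longrightarrow> madd C f (mneg C f) = mzero C (dom f) (cod f)"
  using hom_group_laws(5,6)[OF arr_in_hom[of f] arr_in_hom[of f] arr_in_hom[of f]] by blast+

lemma madd_mzero_left [simp]: "Arr f \<Longrightarrow> dom f = a \<Longrightarrow> cod f = b \<Longrightarrow> madd C (mzero C a b) f = f"
  and madd_mneg_left [simp]: "Arr f \<Longrightarrow> madd C (mneg C f) f = mzero C (dom f) (cod f)"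
  using madd_comm[of f "mzero C a b"] madd_comm[of f "mneg C f"] by auto

lemma comp_madd_right:
  "Arr f \<Longrightarrow> Arr f' \<Longrightarrow> Arr g \<Longrightarrow> dom f' = dom f \<Longrightarrow> cod f' = cod f \<Longrightarrow> cod f = dom g \<Longrightarrow>
   comp C g (madd C f f') = madd C (comp C g f) (comp C g f')"
  using comp_madd_hom_right[OF arr_in_hom[of f], of f' g "cod g"] arr_in_hom[of f'] arr_in_hom[of g]
  by simp

lemma comp_madd_left:
  "Arr f \<Longrightarrow> Arr g \<Longrightarrow> Arr g' \<Longrightarrow> dom g' = dom g \<Longrightarrow> cod g' = cod g \<Longrightarrow> cod f = dom g \<Longrightarrow>
   comp C (madd C g g') f = madd C (comp C g f) (comp C g' f)"
  using comp_madd_hom_left[OF arr_in_hom[of f], of g "cod g" g'] arr_in_hom[of g] arr_in_hom[of g']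
  by simp

lemma madd_left_cancel:
  assumes "Arr x" "Arr y" "Arr y'" "dom y = dom x" "cod y = cod x" "dom y' = dom x" "cod y' = cod x"
    and "madd C x y = madd C x y'"
  shows "y = y'"
proof -
  have "y = madd C (madd C (mneg C x) x) y" using assms by simp
  also have "\<dots> = madd C (mneg C x) (madd C x y)" by (rule madd_assoc) (use assms in auto)
  also have "\<dots> = madd C (madd C (mneg C x) x) y'"
    unfolding assms(8) by (rule madd_assoc[symmetric]) (use assms in auto)
  also have "\<dots> = y'" using assms by simp
  finally show ?thesis .
qed

lemma mneg_unique:
  "Arr x \<Longrightarrow> Arr y \<Longrightarrow> dom y = dom x \<Longrightarrow> cod y = cod x \<Longrightarrow>
   madd C x y = mzero C (dom x) (cod x) \<Longrightarrow> y = mneg C x"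
  by (rule madd_left_cancel[of x]) auto

lemma mzero_unique:
  "Arr x \<Longrightarrow> Arr y \<Longrightarrow> dom y = dom x \<Longrightarrow> cod y = cod x \<Longrightarrow> madd C x y = x \<Longrightarrow>
   y = mzero C (dom x) (cod x)"
  by (rule madd_left_cancel[of x]) auto

lemma comp_mzero_right [simp]:
  assumes "Arr g" "a \<in> Ob C" "dom g = b"
  shows "comp C g (mzero C a b) = mzero C a (cod g)"
proof -
  let ?x = "comp C g (mzero C a b)"
  have "madd C ?x ?x = comp C g (madd C (mzero C a b) (mzero C a b))"
    by (rule comp_madd_right[symmetric]) (use assms in auto)
  moreover have "b \<in> Ob C" using assms ob_dom by blast
  ultimately show ?thesis using mzero_unique[of ?x ?x] assms by simp
qed

lemma comp_mzero_left [simp]: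
  assumes "Arr f" "c \<in> Ob C" "cod f = b"
  shows "comp C (mzero C b c) f = mzero C (dom f) c"
proof -
  let ?x = "comp C (mzero C b c) f"
  have "madd C ?x ?x = comp C (madd C (mzero C b c) (mzero C b c)) f"
    by (rule comp_madd_left[symmetric]) (use assms in auto)
  moreover have "b \<in> Ob C" using assms ob_cod by blast
  ultimately show ?thesis using mzero_unique[of ?x ?x] assms by simp
qed

lemma comp_mneg_right [simp]:
  assumes "Arr f" "Arr g" "cod f = dom g"
  shows "comp C g (mneg C f) = mneg C (comp C g f)"
proof -
  have "madd C (comp C g f) (comp C g (mneg C f)) = comp C g (madd C f (mneg C f))"
    by (rule comp_madd_right[symmetric]) (use assms in auto)
  also have "\<dots> = mzero C (dom f) (cod g)" using assms by simp
  finally show ?thesis using mneg_unique assms by simp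
qed

lemma comp_mneg_left [simp]:
  assumes "Arr f" "Arr g" "cod f = dom g"
  shows "comp C (mneg C g) f = mneg C (comp C g f)"
proof -
  have "madd C (comp C g f) (comp C (mneg C g) f) = comp C (madd C g (mneg C g)) f"
    by (rule comp_madd_left[symmetric]) (use assms in auto)
  also have "\<dots> = mzero C (dom f) (cod g)" using assms by simp
  finally show ?thesis using mneg_unique assms by simp
qed

lemma mneg_mneg [simp]: "Arr f \<Longrightarrow> mneg C (mneg C f) = f"
  using mneg_unique[of "mneg C f" f] by simp

lemma mneg_mzero [simp]: "a \<in> Ob C \<Longrightarrow> b \<in> Ob C \<Longrightarrow> mneg C (mzero C a b) = mzero C a b"
  using mneg_unique[of "mzero C a b" "mzero C a b"] by simp

lemma mneg_inj: "Arr f \<Longrightarrow> Arr g \<Longrightarrow> mneg C f = mneg C g \<Longrightarrow> f = g"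
  by (metis mneg_mneg)

lemma ShO_ob [simp]: "a \<in> Ob C \<Longrightarrow> ShO C a \<in> Ob C"
  using shift_ok_C unfolding shift_ok_def by (elim conjE) blast

lemma ShM_idm [simp]: "a \<in> Ob C \<Longrightarrow> ShM C (idm C a) = idm C (ShO C a)"
  using shift_ok_C unfolding shift_ok_def by (elim conjE) blast

lemma ShM_hom: "f \<in> Hom C a b \<Longrightarrow> ShM C f \<in> Hom C (ShO C a) (ShO C b)"
  using shift_ok_C unfolding shift_ok_def by (elim conjE) blast

lemma ShM_comp_hom: "f \<in> Hom C a b \<Longrightarrow> g \<in> Hom C b c \<Longrightarrow>
   ShM C (comp C g f) = comp C (ShM C g) (ShM C f)"
  using shift_ok_C unfolding shift_ok_def by (elim conjE) blast

lemma ShM_madd_hom: "f \<in> Hom C a b \<Longrightarrow> g \<in> Hom C a b \<Longrightarrow>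
   ShM C (madd C f g) = madd C (ShM C f) (ShM C g)"
  using shift_ok_C unfolding shift_ok_def by (elim conjE) blast

lemma ShM_bij: "a \<in> Ob C \<Longrightarrow> b \<in> Ob C \<Longrightarrow>
   bij_betw (ShM C) (Hom C a b) (Hom C (ShO C a) (ShO C b))"
  using shift_ok_C unfolding shift_ok_def by (elim conjE) blast

lemma arr_ShM [simp]: "Arr f \<Longrightarrow> Arr (ShM C f)"
  and dom_ShM [simp]: "Arr f \<Longrightarrow> dom (ShM C f) = ShO C (dom f)"
  and cod_ShM [simp]: "Arr f \<Longrightarrow> cod (ShM C f) = ShO C (cod f)"
  using ShM_hom[of f "dom f" "cod f"] by (auto simp: hom_iff)

lemma ShM_comp:
  "Arr f \<Longrightarrow> Arr g \<Longrightarrow> cod f = dom g \<Longrightarrow> ShM C (comp C g f) = comp C (ShM C g) (ShM C f)"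
  using ShM_comp_hom[OF arr_in_hom[of f], of g] arr_in_hom[of g] by simp

lemma ShM_madd:
  "Arr f \<Longrightarrow> Arr g \<Longrightarrow> dom g = dom f \<Longrightarrow> cod g = cod f \<Longrightarrow>
   ShM C (madd C f g) = madd C (ShM C f) (ShM C g)"
  using ShM_madd_hom[OF arr_in_hom[of f], of g] arr_in_hom[of g] by simp

lemma ShM_inj:
  assumes "Arr f" "Arr g" "dom g = dom f" "cod g = cod f" "ShM C f = ShM C g"
  shows "f = g"
  using ShM_bij[of "dom f" "cod f"] assms arr_in_hom[of f] arr_in_hom[of g]
  unfolding bij_betw_def inj_on_def by auto

lemma ShM_surj:
  assumes "w \<in> Hom C (ShO C a) (ShO C b)" "a \<in> Ob C" "b \<in> Ob C"
  shows "\<exists>q \<in> Hom C a b. ShM C q = w"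
proof -
  have "w \<in> ShM C ` Hom C a b" using assms ShM_bij[of a b] unfolding bij_betw_def by simp
  then show ?thesis by blast
qed

lemma ShM_mzero [simp]:
  assumes "a \<in> Ob C" "b \<in> Ob C"
  shows "ShM C (mzero C a b) = mzero C (ShO C a) (ShO C b)"
proof -
  let ?x = "ShM C (mzero C a b)"
  have "madd C ?x ?x = ShM C (madd C (mzero C a b) (mzero C a b))"
    by (rule ShM_madd[symmetric]) (use assms in auto)
  then have "madd C ?x ?x = ?x" using assms by simp
  then show ?thesis using mzero_unique[of ?x ?x] assms by simp
qed

lemma ShM_mneg [simp]:
  assumes "Arr f"
  shows "ShM C (mneg C f) = mneg C (ShM C f)"
proof -
  have "madd C (ShM C f) (ShM C (mneg C f)) = ShM C (madd C f (mneg C f))"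
    by (rule ShM_madd[symmetric]) (use assms in auto)
  also have "\<dots> = mzero C (dom (ShM C f)) (cod (ShM C f))" using assms by simp
  finally show ?thesis using mneg_unique assms by simp
qed

lemma comp_reassoc:
  "comp C g f = h \<Longrightarrow> Arr f \<Longrightarrow> Arr g \<Longrightarrow> cod f = dom g \<Longrightarrow> Arr x \<Longrightarrow> cod x = dom f \<Longrightarrow>
   comp C g (comp C f x) = comp C h x"
  using comp_assoc by metis

lemmas comp_simps = comp_assoc[symmetric] comp_madd_right comp_madd_left

lemma isomorphic_obs: "isomorphic C X Y \<Longrightarrow> X \<in> Ob C \<and> Y \<in> Ob C"
  unfolding isomorphic_def is_iso_def using hom_obs by blast

lemma isomorphic_refl: "X \<in> Ob C \<Longrightarrow> isomorphic C X X"
  unfolding isomorphic_def is_iso_def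
  by (auto intro!: exI[of _ "idm C X"] bexI[of _ "idm C X"] simp: hom_iff)

lemma isomorphic_sym: "isomorphic C X Y \<Longrightarrow> isomorphic C Y X"
  unfolding isomorphic_def is_iso_def by blast

lemma isomorphic_trans [trans]:
  assumes "isomorphic C X Y" "isomorphic C Y Z"
  shows "isomorphic C X Z"
proof -
  obtain f f' g g' where
    f: "f \<in> Hom C X Y" "f' \<in> Hom C Y X" "comp C f' f = idm C X" "comp C f f' = idm C Y" and
    g: "g \<in> Hom C Y Z" "g' \<in> Hom C Z Y" "comp C g' g = idm C Y" "comp C g g' = idm C Z"
    using assms unfolding isomorphic_def is_iso_def by blast
  have A: "Arr f" "dom f = X" "cod f = Y" "Arr f'" "dom f' = Y" "cod f' = X"
     "Arr g" "dom g = Y" "cod g = Z" "Arr g'" "dom g' = Z" "cod g' = Y" using f g by (auto simp: hom_iff)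
  have "comp C (comp C f' g') (comp C g f) = idm C X"
    using A comp_reassoc[OF g(3)] comp_reassoc[OF f(3)] f g by (simp add: comp_simps)
  moreover have "comp C (comp C g f) (comp C f' g') = idm C Z"
    using A comp_reassoc[OF g(4)] comp_reassoc[OF f(4)] f g by (simp add: comp_simps)
  ultimately show ?thesis unfolding isomorphic_def is_iso_def using A
    by (auto intro!: exI[of _ "comp C g f"] bexI[of _ "comp C f' g'"] simp: hom_iff)
qed

subsection \<open>Exact triangles and biproducts\<close>

lemma Tri_is_triangle: "T \<in> Tri C \<Longrightarrow> is_triangle C T"
  using triangulated unfolding triangulated_def by (elim conjE) blast

lemma Tri_iso_closed: "T \<in> Tri C \<Longrightarrow> is_triangle C T' \<Longrightarrow> tri_iso C T T' \<Longrightarrow> T' \<in> Tri C"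
  using triangulated unfolding triangulated_def by (elim conjE) blast

lemma Tri_idm_zero: "X \<in> Ob C \<Longrightarrow> zero_object C Z \<Longrightarrow>
   (X, X, Z, idm C X, mzero C X Z, mzero C Z (ShO C X)) \<in> Tri C"
  using triangulated unfolding triangulated_def by (elim conjE) blast

lemma Tri_cone: "f \<in> Hom C X Y \<Longrightarrow> \<exists>Z g h. (X, Y, Z, f, g, h) \<in> Tri C"
  using triangulated unfolding triangulated_def by (elim conjE) blast

lemma Tri_rotate_iff: "is_triangle C (X, Y, Z, f, g, h) \<Longrightarrow>
   (X, Y, Z, f, g, h) \<in> Tri C \<longleftrightarrow> (Y, Z, ShO C X, g, h, mneg C (ShM C f)) \<in> Tri C"
  using triangulated unfolding triangulated_def by (elim conjE) blast

lemma TR3: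
  "\<forall>X Y Z f g h X' Y' Z' f' g' h' u v.
     (X, Y, Z, f, g, h) \<in> Tri C \<longrightarrow> (X', Y', Z', f', g', h') \<in> Tri C \<longrightarrow>
     u \<in> Hom C X X' \<longrightarrow> v \<in> Hom C Y Y' \<longrightarrow> comp C v f = comp C f' u \<longrightarrow>
     (\<exists>w. tri_morph C (X, Y, Z, f, g, h) (X', Y', Z', f', g', h') u v w)"
  using triangulated unfolding triangulated_def by (elim conjE)

lemma TR4:
  "\<forall>X Y Z f g Q1 p1 d1 Q2 p2 d2 Q3 p3 d3.
     f \<in> Hom C X Y \<longrightarrow> g \<in> Hom C Y Z \<longrightarrow>
     (X, Y, Q1, f, p1, d1) \<in> Tri C \<longrightarrow> (X, Z, Q2, comp C g f, p2, d2) \<in> Tri C \<longrightarrow>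
     (Y, Z, Q3, g, p3, d3) \<in> Tri C \<longrightarrow>
     (\<exists>a b. a \<in> Hom C Q1 Q2 \<and> b \<in> Hom C Q2 Q3 \<and>
        (Q1, Q2, Q3, a, b, comp C (ShM C p1) d3) \<in> Tri C \<and>
        comp C a p1 = comp C p2 g \<and> comp C d2 a = d1 \<and>
        comp C b p2 = p3 \<and> comp C d3 b = comp C (ShM C f) d2)"
  using triangulated unfolding triangulated_def by (elim conjE)

lemma Tri_octahedral:
  "f \<in> Hom C X Y \<Longrightarrow> g \<in> Hom C Y Z \<Longrightarrow>
   (X, Y, Q1, f, p1, d1) \<in> Tri C \<Longrightarrow> (X, Z, Q2, comp C g f, p2, d2) \<in> Tri C \<Longrightarrow>
   (Y, Z, Q3, g, p3, d3) \<in> Tri C \<Longrightarrow> \<exists>a b. (Q1, Q2, Q3, a, b, comp C (ShM C p1) d3) \<in> Tri C"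
  using TR4 by blast

lemma Tri_homs:
  "(X, Y, Z, f, g, h) \<in> Tri C \<Longrightarrow> f \<in> Hom C X Y \<and> g \<in> Hom C Y Z \<and> h \<in> Hom C Z (ShO C X)"
  using Tri_is_triangle[of "(X, Y, Z, f, g, h)"] unfolding is_triangle_def by simp

lemma Tri_arrs:
  "(X, Y, Z, f, g, h) \<in> Tri C \<Longrightarrow>
   Arr f \<and> dom f = X \<and> cod f = Y \<and> Arr g \<and> dom g = Y \<and> cod g = Z \<and>
   Arr h \<and> dom h = Z \<and> cod h = ShO C X \<and> X \<in> Ob C \<and> Y \<in> Ob C \<and> Z \<in> Ob C"
  using Tri_homs[of X Y Z f g h] hom_obs[of f X Y] hom_obs[of g Y Z] by (auto simp: hom_iff)

lemma Tri_rotate: "(X, Y, Z, f, g, h) \<in> Tri C \<Longrightarrow> (Y, Z, ShO C X, g, h, mneg C (ShM C f)) \<in> Tri C"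
  using Tri_rotate_iff[of X Y Z f g h] Tri_is_triangle[of "(X, Y, Z, f, g, h)"] by blast

lemma Tri_morphism:
  assumes "(X, Y, Z, f, g, h) \<in> Tri C" "(X', Y', Z', f', g', h') \<in> Tri C"
    and "u \<in> Hom C X X'" "v \<in> Hom C Y Y'" "comp C v f = comp C f' u"
  shows "\<exists>w. w \<in> Hom C Z Z' \<and> comp C w g = comp C g' v \<and> comp C (ShM C u) h = comp C h' w"
proof -
  obtain w where "tri_morph C (X, Y, Z, f, g, h) (X', Y', Z', f', g', h') u v w"
    using TR3 assms by blast
  then show ?thesis unfolding tri_morph_def by auto
qed

definition z0 :: 'o where
  "z0 = (SOME z. zero_object C z)"

lemma zero_object_z0: "zero_object C z0"
proof -
  have "\<exists>z. zero_object C z" using additive_C unfolding additive_def by blast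
  then show ?thesis unfolding z0_def by (rule someI_ex)
qed

lemma z0_ob [simp]: "z0 \<in> Ob C"
  using zero_object_z0 unfolding zero_object_def by blast

lemma hom_to_zero:
  assumes "zero_object C z" "f \<in> Hom C a z"
  shows "f = mzero C a z"
proof -
  have a: "a \<in> Ob C" "z \<in> Ob C" using assms(2) hom_obs by auto
  then have "\<exists>!f. f \<in> Hom C a z" using assms(1) unfolding zero_object_def by blast
  then show ?thesis using assms(2) mzero_hom[OF a] by blast
qed

lemma Tri_idm: "X \<in> Ob C \<Longrightarrow> (X, X, z0, idm C X, mzero C X z0, mzero C z0 (ShO C X)) \<in> Tri C"
  using Tri_idm_zero zero_object_z0 by blast

lemma Tri_comp_zero:
  assumes t: "(X, Y, Z, f, g, h) \<in> Tri C"
  shows "comp C g f = mzero C X Z"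
proof -
  note A = Tri_arrs[OF t]
  have "\<exists>w. w \<in> Hom C z0 Z \<and> comp C w (mzero C X z0) = comp C g f \<and>
      comp C (ShM C (idm C X)) (mzero C z0 (ShO C X)) = comp C h w"
    by (rule Tri_morphism[OF Tri_idm t]) (use A in \<open>auto simp: hom_iff\<close>)
  then obtain w where w: "w \<in> Hom C z0 Z" "comp C w (mzero C X z0) = comp C g f" by blast
  have "comp C w (mzero C X z0) = mzero C X Z" using w A by (auto simp: hom_iff)
  then show ?thesis using w by simp
qed

lemma Tri_hom_exact:
  assumes t: "(A, B, Cc, a, b, c) \<in> Tri C" and m: "m \<in> Hom C W B" and bm: "comp C b m = mzero C W Cc"
  shows "\<exists>q \<in> Hom C W A. m = comp C a q"
proof -
  note At = Tri_arrs[OF t]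
  have W: "W \<in> Ob C" using m hom_obs by blast
  have t0: "(W, z0, ShO C W, mzero C W z0, mzero C z0 (ShO C W), mneg C (ShM C (idm C W))) \<in> Tri C"
    using Tri_rotate[OF Tri_idm[OF W]] .
  have t1: "(B, Cc, ShO C A, b, c, mneg C (ShM C a)) \<in> Tri C" using Tri_rotate[OF t] .
  have z: "mzero C z0 Cc \<in> Hom C z0 Cc" using At by (simp add: mzero_hom)
  have e0: "comp C (mzero C z0 Cc) (mzero C W z0) = comp C b m" using bm At W by simp
  \<comment> \<open>TR3 for the rotations of \<open>W \<rightarrow> W \<rightarrow> 0\<close> and of \<open>t\<close>, then undo the shift\<close>
  obtain w where w: "w \<in> Hom C (ShO C W) (ShO C A)"
     "comp C (ShM C m) (mneg C (ShM C (idm C W))) = comp C (mneg C (ShM C a)) w"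
    using Tri_morphism[OF t0 t1 m z e0] by blast
  have mA: "Arr m" "dom m = W" "cod m = B" using m by (auto simp: hom_iff)
  have wA: "Arr w" "dom w = ShO C W" "cod w = ShO C A" using w by (auto simp: hom_iff)
  have "mneg C (ShM C m) = mneg C (comp C (ShM C a) w)" using w(2) mA wA At W by simp
  then have e: "ShM C m = comp C (ShM C a) w" using mneg_inj mA wA At by simp
  obtain q where q: "q \<in> Hom C W A" "ShM C q = w" using ShM_surj[OF w(1) W] At by blast
  have qA: "Arr q" "dom q = W" "cod q = A" using q by (auto simp: hom_iff)
  have e2: "ShM C (comp C a q) = ShM C m" using e q qA At by (simp add: ShM_comp)
  have "comp C a q = m" by (rule ShM_inj[OF _ _ _ _ e2]) (use qA At mA in auto)
  then show ?thesis using q by blast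
qed

definition biproduct_diagram :: "'o \<Rightarrow> 'o \<Rightarrow> 'o \<Rightarrow> 'm \<Rightarrow> 'm \<Rightarrow> 'm \<Rightarrow> 'm \<Rightarrow> bool" where
  "biproduct_diagram A B S i1 i2 p1 p2 \<longleftrightarrow>
     i1 \<in> Hom C A S \<and> i2 \<in> Hom C B S \<and> p1 \<in> Hom C S A \<and> p2 \<in> Hom C S B \<and>
     comp C p1 i1 = idm C A \<and> comp C p2 i2 = idm C B \<and>
     comp C p2 i1 = mzero C A B \<and> comp C p1 i2 = mzero C B A \<and>
     madd C (comp C i1 p1) (comp C i2 p2) = idm C S"

lemma biproduct_diagramD:
  assumes "biproduct_diagram A B S i1 i2 p1 p2"
  shows "i1 \<in> Hom C A S" "i2 \<in> Hom C B S" "p1 \<in> Hom C S A" "p2 \<in> Hom C S B"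
    "comp C p1 i1 = idm C A" "comp C p2 i2 = idm C B"
    "comp C p2 i1 = mzero C A B" "comp C p1 i2 = mzero C B A"
    "madd C (comp C i1 p1) (comp C i2 p2) = idm C S"
  using assms unfolding biproduct_diagram_def by blast+

lemma biproduct_diagram_arrs:
  assumes "biproduct_diagram A B S i1 i2 p1 p2"
  shows "Arr i1" "dom i1 = A" "cod i1 = S" "Arr i2" "dom i2 = B" "cod i2 = S"
    "Arr p1" "dom p1 = S" "cod p1 = A" "Arr p2" "dom p2 = S" "cod p2 = B"
    "A \<in> Ob C" "B \<in> Ob C" "S \<in> Ob C"
  using biproduct_diagramD(1-4)[OF assms] hom_obs by (auto simp: hom_iff)

lemma is_biproduct_iff:
  "is_biproduct C A B S \<longleftrightarrow> (\<exists>i1 i2 p1 p2. biproduct_diagram A B S i1 i2 p1 p2)"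
  unfolding is_biproduct_def biproduct_diagram_def using hom_obs by blast

lemma biproductE:
  assumes "is_biproduct C A B S"
  obtains i1 i2 p1 p2 where "biproduct_diagram A B S i1 i2 p1 p2"
  using assms is_biproduct_iff by blast

lemma biproduct_obs: "is_biproduct C A B S \<Longrightarrow> A \<in> Ob C \<and> B \<in> Ob C \<and> S \<in> Ob C"
  unfolding is_biproduct_def by blast

lemma biproduct_diagram_swap:
  assumes "biproduct_diagram A B S i1 i2 p1 p2"
  shows "biproduct_diagram B A S i2 i1 p2 p1"
proof -
  note m = biproduct_diagramD[OF assms] and H = biproduct_diagram_arrs[OF assms]
  have "madd C (comp C i2 p2) (comp C i1 p1) = madd C (comp C i1 p1) (comp C i2 p2)"
    by (rule madd_comm) (use H in auto)
  then show ?thesis unfolding biproduct_diagram_def using m by simp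
qed

lemma biproduct_swap: "is_biproduct C A B S \<Longrightarrow> is_biproduct C B A S"
  unfolding is_biproduct_iff using biproduct_diagram_swap by blast

lemma split_Tri_mono:
  assumes t: "(X, Y, Z, f, g, mzero C Z (ShO C X)) \<in> Tri C"
    and t1: "t1 \<in> Hom C W X" and t2: "t2 \<in> Hom C W X" and e: "comp C f t1 = comp C f t2"
  shows "t1 = t2"
proof -
  note At = Tri_arrs[OF t]
  have A1: "Arr t1" "dom t1 = W" "cod t1 = X" using t1 by (auto simp: hom_iff)
  have A2: "Arr t2" "dom t2 = W" "cod t2 = X" using t2 by (auto simp: hom_iff)
  have W: "W \<in> Ob C" using A1 by auto
  let ?t = "madd C t1 (mneg C t2)"
  have At': "Arr ?t" "dom ?t = W" "cod ?t = X" using A1 A2 by auto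
  have ft: "comp C f ?t = mzero C W Y"
  proof -
    have "comp C f ?t = madd C (comp C f t1) (comp C f (mneg C t2))"
      by (rule comp_madd_right) (use A1 A2 At in auto)
    also have "\<dots> = mzero C W Y" using e A2 At by simp
    finally show ?thesis .
  qed
  \<comment> \<open>after two rotations the first map of the triangle is zero, so \<open>ShM ?t\<close> factors through it\<close>
  have t'': "(Z, ShO C X, ShO C Y, mzero C Z (ShO C X), mneg C (ShM C f), mneg C (ShM C g)) \<in> Tri C"
    using Tri_rotate[OF Tri_rotate[OF t]] .
  have m: "ShM C ?t \<in> Hom C (ShO C W) (ShO C X)" using At' by (simp add: hom_iff)
  have "comp C (mneg C (ShM C f)) (ShM C ?t) = mneg C (ShM C (comp C f ?t))"
    using At At' by (simp add: ShM_comp)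
  also have "\<dots> = mzero C (ShO C W) (ShO C Y)" using ft W At by simp
  finally obtain q where q: "q \<in> Hom C (ShO C W) Z" "ShM C ?t = comp C (mzero C Z (ShO C X)) q"
    using Tri_hom_exact[OF t'' m] by blast
  have "ShM C ?t = mzero C (ShO C W) (ShO C X)" using q At by (simp add: hom_iff)
  also have "\<dots> = ShM C (mzero C W X)" using W At by simp
  finally have "?t = mzero C W X" by (rule ShM_inj[rotated 4]) (use At' W At in auto)
  then have "mneg C t2 = mneg C t1" using mneg_unique[of t1 "mneg C t2"] A1 A2 by simp
  then show "t1 = t2" using mneg_inj A1 A2 by metis
qed

lemma split_Tri_diagram:
  assumes t: "(X, Y, Z, f, g, mzero C Z (ShO C X)) \<in> Tri C"
  shows "\<exists>s p. biproduct_diagram X Z Y f s p g"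
proof -
  note At = Tri_arrs[OF t]
  have "\<exists>s \<in> Hom C Z Y. idm C Z = comp C g s"
    by (rule Tri_hom_exact[OF Tri_rotate[OF t]]) (use At in \<open>auto simp: hom_iff\<close>)
  then obtain s where s: "s \<in> Hom C Z Y" "comp C g s = idm C Z" by auto
  have As: "Arr s" "dom s = Z" "cod s = Y" using s by (auto simp: hom_iff)
  have gf: "comp C g f = mzero C X Z" using Tri_comp_zero[OF t] .
  let ?m = "madd C (idm C Y) (mneg C (comp C s g))"
  have Am: "Arr ?m" "dom ?m = Y" "cod ?m = Y" using As At by auto
  have gm: "comp C g ?m = mzero C Y Z"
  proof -
    have "comp C g ?m = madd C (comp C g (idm C Y)) (comp C g (mneg C (comp C s g)))"
      by (rule comp_madd_right) (use As At in auto)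
    also have "\<dots> = madd C g (mneg C (comp C g (comp C s g)))" using As At by simp
    also have "comp C g (comp C s g) = comp C (comp C g s) g" by (rule comp_assoc) (use As At in auto)
    also have "\<dots> = g" using s(2) At by simp
    finally show ?thesis using At by simp
  qed
  have "\<exists>p \<in> Hom C Y X. ?m = comp C f p"
    by (rule Tri_hom_exact[OF t]) (use Am gm in \<open>auto simp: hom_iff\<close>)
  then obtain p where p: "p \<in> Hom C Y X" "comp C f p = ?m" by auto
  have Ap: "Arr p" "dom p = Y" "cod p = X" using p by (auto simp: hom_iff)
  have fm: "comp C f (comp C p x) = madd C x (mneg C (comp C s (comp C g x)))"
    if "Arr x" "cod x = Y" for x
  proof -
    have "comp C f (comp C p x) = comp C ?m x" using p(2) comp_assoc Ap At that by metis
    also have "\<dots> = madd C (comp C (idm C Y) x) (comp C (mneg C (comp C s g)) x)"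
      by (rule comp_madd_left) (use As At that in auto)
    also have "\<dots> = madd C x (mneg C (comp C s (comp C g x)))"
      using As At that by (simp add: comp_assoc)
    finally show ?thesis .
  qed
  have pf: "comp C p f = idm C X"
    by (rule split_Tri_mono[OF t]) (use fm[of f] gf Ap As At in \<open>auto simp: hom_iff\<close>)
  have ps: "comp C p s = mzero C Z X"
    by (rule split_Tri_mono[OF t]) (use fm[of s] s(2) Ap As At in \<open>auto simp: hom_iff\<close>)
  have "madd C (comp C f p) (comp C s g) = madd C (idm C Y) (madd C (mneg C (comp C s g)) (comp C s g))"
    unfolding p(2) by (rule madd_assoc) (use As At in auto)
  then have "madd C (comp C f p) (comp C s g) = idm C Y" using As At by simp
  moreover have "f \<in> Hom C X Y" "g \<in> Hom C Y Z" using At by (auto simp: hom_iff)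
  ultimately show ?thesis unfolding biproduct_diagram_def using s p(1) pf ps gf by blast
qed

lemma split_Tri_biproduct: "(X, Y, Z, f, g, mzero C Z (ShO C X)) \<in> Tri C \<Longrightarrow> is_biproduct C X Z Y"
  using split_Tri_diagram is_biproduct_iff by blast

lemma Tri_retraction_zero:
  assumes t: "(U, S, W, i, g, h) \<in> Tri C" and p: "p \<in> Hom C S U" "comp C p i = idm C U"
  shows "h = mzero C W (ShO C U)"
proof -
  note At = Tri_arrs[OF t]
  obtain w where "w \<in> Hom C W z0" "comp C (ShM C (idm C U)) h = comp C (mzero C z0 (ShO C U)) w"
    using Tri_morphism[OF t Tri_idm idm_hom p(1)] p(2) At by (auto simp: hom_iff)
  then show ?thesis using At by (auto simp: hom_iff)
qed

lemma Tri_split_replace_third: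
  assumes t: "(X, Y, Z, f, g, mzero C Z (ShO C X)) \<in> Tri C"
    and \<beta>: "is_iso C \<beta> Z Z'" "comp C \<beta> g = g'"
  shows "(X, Y, Z', f, g', mzero C Z' (ShO C X)) \<in> Tri C"
proof -
  note At = Tri_arrs[OF t]
  have Ab: "Arr \<beta>" "dom \<beta> = Z" "cod \<beta> = Z'" using \<beta>(1) unfolding is_iso_def by (auto simp: hom_iff)
  have "is_iso C (idm C X) X X" "is_iso C (idm C Y) Y Y"
    unfolding is_iso_def using At by (auto intro!: bexI[of _ "idm C _"] simp: hom_iff)
  moreover have "tri_morph C (X, Y, Z, f, g, mzero C Z (ShO C X)) (X, Y, Z', f, g', mzero C Z' (ShO C X))
      (idm C X) (idm C Y) \<beta>"
    unfolding tri_morph_def using At Ab \<beta>(2) by (auto simp: hom_iff)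
  ultimately have "tri_iso C (X, Y, Z, f, g, mzero C Z (ShO C X)) (X, Y, Z', f, g', mzero C Z' (ShO C X))"
    unfolding tri_iso_def using \<beta>(1) by blast
  moreover have "is_triangle C (X, Y, Z', f, g', mzero C Z' (ShO C X))"
    unfolding is_triangle_def using At Ab \<beta>(2) by (auto simp: hom_iff)
  ultimately show ?thesis using Tri_iso_closed t by blast
qed

lemma biproduct_diagram_Tri:
  assumes d: "biproduct_diagram U V S i1 i2 p1 p2"
  shows "(U, S, V, i1, p2, mzero C V (ShO C U)) \<in> Tri C"
proof -
  note m = biproduct_diagramD[OF d] and A = biproduct_diagram_arrs[OF d]
  obtain W g h where "(U, S, W, i1, g, h) \<in> Tri C" using Tri_cone[OF m(1)] by blast
  with Tri_retraction_zero[OF _ m(3,5)]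
  have t: "(U, S, W, i1, g, mzero C W (ShO C U)) \<in> Tri C" by blast
  note At = Tri_arrs[OF t]
  obtain s p where sp: "biproduct_diagram U W S i1 s p g" using split_Tri_diagram[OF t] by blast
  note n = biproduct_diagramD[OF sp] and As = biproduct_diagram_arrs[OF sp]
  \<comment> \<open>both \<open>V\<close> and \<open>W\<close> are complements of \<open>i1\<close>, compared by \<open>p2 s\<close> and \<open>g i2\<close>\<close>
  define \<beta> where "\<beta> = comp C p2 s"
  define \<alpha> where "\<alpha> = comp C g i2"
  have Ab: "Arr \<beta>" "dom \<beta> = W" "cod \<beta> = V" "Arr \<alpha>" "dom \<alpha> = V" "cod \<alpha> = W"
    unfolding \<alpha>_def \<beta>_def using A As by auto
  have "p2 = comp C p2 (madd C (comp C i1 p) (comp C s g))" using n(9) A by simp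
  also have "\<dots> = comp C \<beta> g"
    unfolding \<beta>_def using A As comp_reassoc[OF m(7)] by (simp add: comp_simps)
  finally have bg: "comp C \<beta> g = p2" ..
  have ba: "comp C \<beta> \<alpha> = idm C V"
    unfolding \<alpha>_def using bg m(6) A As Ab by (simp add: comp_assoc)
  have "idm C W = comp C g (comp C (madd C (comp C i1 p1) (comp C i2 p2)) s)" using n(6) m(9) As by simp
  also have "\<dots> = comp C \<alpha> \<beta>"
    unfolding \<alpha>_def \<beta>_def using A As n(7) comp_reassoc[OF n(7)] by (simp add: comp_simps)
  finally have ab: "comp C \<alpha> \<beta> = idm C W" ..
  have "is_iso C \<beta> W V"
    unfolding is_iso_def using Ab ab ba by (auto intro!: bexI[of _ \<alpha>] simp: hom_iff)
  then show ?thesis using Tri_split_replace_third[OF t _ bg] by blast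
qed

lemma biproduct_Tri: "is_biproduct C U V S \<Longrightarrow> \<exists>i1 p2. (U, S, V, i1, p2, mzero C V (ShO C U)) \<in> Tri C"
  by (erule biproductE) (blast intro: biproduct_diagram_Tri)

lemma Tri_biproduct_mid:
  assumes t: "(X, Y, Z, f, g, h) \<in> Tri C" and b: "is_biproduct C Y A S"
  shows "\<exists>f' Q g' h'. (X, S, Q, f', g', h') \<in> Tri C \<and> is_biproduct C Z A Q"
proof -
  obtain i1 i2 p1 p2 where d: "biproduct_diagram Y A S i1 i2 p1 p2" using biproductE[OF b] .
  note m = biproduct_diagramD[OF d]
  note At = Tri_arrs[OF t]
  have fh: "f \<in> Hom C X Y" using Tri_homs[OF t] by blast
  obtain Q g' h' where t2: "(X, S, Q, comp C i1 f, g', h') \<in> Tri C"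
    using Tri_cone[OF comp_hom[OF fh m(1)]] by blast
  obtain a b where "(Z, Q, A, a, b, comp C (ShM C g) (mzero C A (ShO C Y))) \<in> Tri C"
    using Tri_octahedral[OF fh m(1) t t2 biproduct_diagram_Tri[OF d]] by blast
  moreover have "comp C (ShM C g) (mzero C A (ShO C Y)) = mzero C A (ShO C Z)"
    using At m hom_obs by simp
  ultimately have "(Z, Q, A, a, b, mzero C A (ShO C Z)) \<in> Tri C" by simp
  then show ?thesis using split_Tri_biproduct t2 by blast
qed

lemma Tri_biproduct_first:
  assumes t: "(X, Y, Z, f, g, h) \<in> Tri C" and b: "is_biproduct C X B S"
  shows "\<exists>f' Q g' h'. (S, Y, Q, f', g', h') \<in> Tri C \<and> is_biproduct C (ShO C B) Z Q"
proof -
  obtain i1 i2 p1 p2 where d: "biproduct_diagram X B S i1 i2 p1 p2" using biproductE[OF b] .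
  note m = biproduct_diagramD[OF d]
  note At = Tri_arrs[OF t]
  have fh: "f \<in> Hom C X Y" using Tri_homs[OF t] by blast
  have B: "B \<in> Ob C" using biproduct_diagram_arrs[OF d] by blast
  have t1: "(S, X, ShO C B, p1, mzero C X (ShO C B), mneg C (ShM C i2)) \<in> Tri C"
    using Tri_rotate[OF biproduct_diagram_Tri[OF biproduct_diagram_swap[OF d]]] .
  obtain Q g' h' where t2: "(S, Y, Q, comp C f p1, g', h') \<in> Tri C"
    using Tri_cone[OF comp_hom[OF m(3) fh]] by blast
  obtain a b where "(ShO C B, Q, Z, a, b, comp C (ShM C (mzero C X (ShO C B))) h) \<in> Tri C"
    using Tri_octahedral[OF m(3) fh t1 t2 t] by blast
  moreover have "comp C (ShM C (mzero C X (ShO C B))) h = mzero C Z (ShO C (ShO C B))"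
    using At B by simp
  ultimately have "(ShO C B, Q, Z, a, b, mzero C Z (ShO C (ShO C B))) \<in> Tri C" by simp
  then show ?thesis using split_Tri_biproduct t2 by blast
qed

lemma biproduct_cong:
  assumes "isomorphic C A A'" "isomorphic C B B'" "is_biproduct C A B S" "is_biproduct C A' B' S'"
  shows "isomorphic C S S'"
proof -
  obtain a a' where a: "a \<in> Hom C A A'" "a' \<in> Hom C A' A" "comp C a' a = idm C A" "comp C a a' = idm C A'"
    using assms(1) unfolding isomorphic_def is_iso_def by blast
  obtain b b' where b: "b \<in> Hom C B B'" "b' \<in> Hom C B' B" "comp C b' b = idm C B" "comp C b b' = idm C B'"
    using assms(2) unfolding isomorphic_def is_iso_def by blast
  obtain i1 i2 p1 p2 where d: "biproduct_diagram A B S i1 i2 p1 p2" using biproductE[OF assms(3)] .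
  obtain j1 j2 q1 q2 where d': "biproduct_diagram A' B' S' j1 j2 q1 q2" using biproductE[OF assms(4)] .
  note m = biproduct_diagramD[OF d] and n = biproduct_diagramD[OF d']
  have H: "Arr a" "dom a = A" "cod a = A'" "Arr a'" "dom a' = A'" "cod a' = A"
    "Arr b" "dom b = B" "cod b = B'" "Arr b'" "dom b' = B'" "cod b' = B"
    using a b by (auto simp: hom_iff)
  note H = H biproduct_diagram_arrs[OF d] biproduct_diagram_arrs[OF d']
  define \<phi> where "\<phi> = madd C (comp C j1 (comp C a p1)) (comp C j2 (comp C b p2))"
  define \<psi> where "\<psi> = madd C (comp C i1 (comp C a' q1)) (comp C i2 (comp C b' q2))"
  have "comp C \<psi> \<phi> = idm C S"
    unfolding \<phi>_def \<psi>_def using H comp_reassoc[OF a(3)] comp_reassoc[OF b(3)]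
      comp_reassoc[OF n(5)] comp_reassoc[OF n(6)] comp_reassoc[OF n(7)] comp_reassoc[OF n(8)] m(9)
    by (simp add: comp_simps)
  moreover have "comp C \<phi> \<psi> = idm C S'"
    unfolding \<phi>_def \<psi>_def using H comp_reassoc[OF a(4)] comp_reassoc[OF b(4)]
      comp_reassoc[OF m(5)] comp_reassoc[OF m(6)] comp_reassoc[OF m(7)] comp_reassoc[OF m(8)] n(9)
    by (simp add: comp_simps)
  moreover have "\<phi> \<in> Hom C S S'" "\<psi> \<in> Hom C S' S"
    unfolding \<phi>_def \<psi>_def using H by (auto simp: hom_iff)
  ultimately show ?thesis unfolding isomorphic_def is_iso_def by blast
qed

lemma biproduct_hom_ext:
  assumes d: "biproduct_diagram A B S i1 i2 p1 p2"
    and "x \<in> Hom C W S" "y \<in> Hom C W S" "comp C p1 x = comp C p1 y" "comp C p2 x = comp C p2 y"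
  shows "x = y"
proof -
  have H: "Arr x" "dom x = W" "cod x = S" "Arr y" "dom y = W" "cod y = S"
    using assms by (auto simp: hom_iff)
  note H = H biproduct_diagram_arrs[OF d] and m = biproduct_diagramD[OF d]
  have "x = comp C (madd C (comp C i1 p1) (comp C i2 p2)) x" using m(9) H by simp
  also have "\<dots> = madd C (comp C i1 (comp C p1 x)) (comp C i2 (comp C p2 x))"
    using H by (simp add: comp_simps)
  also have "\<dots> = madd C (comp C i1 (comp C p1 y)) (comp C i2 (comp C p2 y))"
    using assms(4,5) by simp
  also have "\<dots> = comp C (madd C (comp C i1 p1) (comp C i2 p2)) y" using H by (simp add: comp_simps)
  also have "\<dots> = y" using m(9) H by simp
  finally show ?thesis .
qed

lemma biproduct_assoc:
  assumes "is_biproduct C A B S1" "is_biproduct C S1 R S" "is_biproduct C B R T1"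
  shows "is_biproduct C A T1 S"
proof -
  obtain i1 i2 p1 p2 where dm: "biproduct_diagram A B S1 i1 i2 p1 p2" using biproductE[OF assms(1)] .
  obtain k1 k2 r1 r2 where dk: "biproduct_diagram S1 R S k1 k2 r1 r2" using biproductE[OF assms(2)] .
  obtain l1 l2 n1 n2 where dl: "biproduct_diagram B R T1 l1 l2 n1 n2" using biproductE[OF assms(3)] .
  note m = biproduct_diagramD[OF dm] and k = biproduct_diagramD[OF dk]
    and l = biproduct_diagramD[OF dl]
  note H = biproduct_diagram_arrs[OF dm] biproduct_diagram_arrs[OF dk] biproduct_diagram_arrs[OF dl]
  note E = comp_reassoc[OF m(5)] comp_reassoc[OF m(6)] comp_reassoc[OF m(7)] comp_reassoc[OF m(8)]
    comp_reassoc[OF k(5)] comp_reassoc[OF k(6)] comp_reassoc[OF k(7)] comp_reassoc[OF k(8)]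
    comp_reassoc[OF l(5)] comp_reassoc[OF l(6)] comp_reassoc[OF l(7)] comp_reassoc[OF l(8)]
    m(5-8) k(5-8) l(5-8)
  define I1 where "I1 = comp C k1 i1"
  define P1 where "P1 = comp C p1 r1"
  define I2 where "I2 = madd C (comp C k1 (comp C i2 n1)) (comp C k2 n2)"
  define P2 where "P2 = madd C (comp C l1 (comp C p2 r1)) (comp C l2 r2)"
  note defs = I1_def P1_def I2_def P2_def
  have HI: "I1 \<in> Hom C A S" "P1 \<in> Hom C S A" "I2 \<in> Hom C T1 S" "P2 \<in> Hom C S T1"
    unfolding defs using H by (auto simp: hom_iff)
  have e1: "comp C P1 I1 = idm C A" unfolding defs using H E by (simp add: comp_simps)
  have e3: "comp C P2 I1 = mzero C A T1" unfolding defs using H E by (simp add: comp_simps)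
  have e4: "comp C P1 I2 = mzero C T1 A" unfolding defs using H E by (simp add: comp_simps)
  have e2: "comp C P2 I2 = idm C T1"
  proof (rule biproduct_hom_ext[OF dl])
    show "comp C P2 I2 \<in> Hom C T1 T1" "idm C T1 \<in> Hom C T1 T1" using HI H by (auto simp: hom_iff)
    show "comp C n1 (comp C P2 I2) = comp C n1 (idm C T1)" "comp C n2 (comp C P2 I2) = comp C n2 (idm C T1)"
      unfolding defs using H E by (simp_all add: comp_simps)
  qed
  have e5: "madd C (comp C I1 P1) (comp C I2 P2) = idm C S"
  proof (rule biproduct_hom_ext[OF dk])
    show "madd C (comp C I1 P1) (comp C I2 P2) \<in> Hom C S S" "idm C S \<in> Hom C S S"
      using HI H by (auto simp: hom_iff)
    show "comp C r2 (madd C (comp C I1 P1) (comp C I2 P2)) = comp C r2 (idm C S)"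
      unfolding defs using H E by (simp add: comp_simps)
    show "comp C r1 (madd C (comp C I1 P1) (comp C I2 P2)) = comp C r1 (idm C S)"
    proof (rule biproduct_hom_ext[OF dm])
      show "comp C r1 (madd C (comp C I1 P1) (comp C I2 P2)) \<in> Hom C S S1"
        "comp C r1 (idm C S) \<in> Hom C S S1"
        using HI H by (auto simp: hom_iff)
      show "comp C p1 (comp C r1 (madd C (comp C I1 P1) (comp C I2 P2))) = comp C p1 (comp C r1 (idm C S))"
        "comp C p2 (comp C r1 (madd C (comp C I1 P1) (comp C I2 P2))) = comp C p2 (comp C r1 (idm C S))"
        unfolding defs using H E by (simp_all add: comp_simps)
    qed
  qed
  show ?thesis unfolding is_biproduct_iff biproduct_diagram_def using HI e1 e2 e3 e4 e5 by blast
qed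

lemma biproduct_zero:
  assumes b: "is_biproduct C X z Q" and z: "zero_object C z"
  shows "isomorphic C X Q"
proof -
  obtain i1 i2 p1 p2 where d: "biproduct_diagram X z Q i1 i2 p1 p2" using biproductE[OF b] .
  note m = biproduct_diagramD[OF d] and H = biproduct_diagram_arrs[OF d]
  have "comp C i1 p1 = idm C Q"
  proof (rule biproduct_hom_ext[OF d])
    show "comp C p1 (comp C i1 p1) = comp C p1 (idm C Q)" using H comp_reassoc[OF m(5)] by simp
    have "comp C p2 (comp C i1 p1) \<in> Hom C Q z" "comp C p2 (idm C Q) \<in> Hom C Q z"
      using H by (auto simp: hom_iff)
    then show "comp C p2 (comp C i1 p1) = comp C p2 (idm C Q)" using hom_to_zero[OF z] by metis
  qed (use H in \<open>auto simp: hom_iff\<close>)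
  then show ?thesis unfolding isomorphic_def is_iso_def using m by blast
qed

subsection \<open>Finite direct sums\<close>

definition dsum :: "'o \<Rightarrow> 'o \<Rightarrow> 'o" where
  "dsum A B = (SOME S. is_biproduct C A B S)"

lemma dsum_biproduct:
  assumes "A \<in> Ob C" "B \<in> Ob C"
  shows "is_biproduct C A B (dsum A B)"
proof -
  have "\<exists>S. is_biproduct C A B S" using assms additive_C unfolding additive_def by blast
  then show ?thesis unfolding dsum_def by (rule someI_ex)
qed

lemma dsum_ob [simp]: "A \<in> Ob C \<Longrightarrow> B \<in> Ob C \<Longrightarrow> dsum A B \<in> Ob C"
  using dsum_biproduct biproduct_obs by blast

lemma biproduct_unique: "is_biproduct C A B S \<Longrightarrow> is_biproduct C A B S' \<Longrightarrow> isomorphic C S S'"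
  using biproduct_cong isomorphic_refl biproduct_obs by metis

fun dsum_list :: "'o list \<Rightarrow> 'o" where
  "dsum_list [] = z0"
| "dsum_list (x # xs) = dsum x (dsum_list xs)"

lemma dsum_list_ob [simp]: "set L \<subseteq> Ob C \<Longrightarrow> dsum_list L \<in> Ob C"
  by (induct L) auto

lemma dsum_zero_left: "Y \<in> Ob C \<Longrightarrow> isomorphic C Y (dsum z0 Y)"
  using biproduct_zero[OF biproduct_swap[OF dsum_biproduct] zero_object_z0] by simp

lemma dsum_zero_right: "Y \<in> Ob C \<Longrightarrow> isomorphic C Y (dsum Y z0)"
  using biproduct_zero[OF dsum_biproduct zero_object_z0] by simp

lemma dsum_cong:
  assumes "isomorphic C A A'" "isomorphic C B B'"
  shows "isomorphic C (dsum A B) (dsum A' B')"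
proof -
  have O: "A \<in> Ob C" "A' \<in> Ob C" "B \<in> Ob C" "B' \<in> Ob C" using assms isomorphic_obs by auto
  show ?thesis using biproduct_cong[OF assms dsum_biproduct[OF O(1,3)] dsum_biproduct[OF O(2,4)]] .
qed

lemma dsum_assoc:
  assumes "A \<in> Ob C" "B \<in> Ob C" "R \<in> Ob C"
  shows "isomorphic C (dsum (dsum A B) R) (dsum A (dsum B R))"
  using biproduct_unique[OF biproduct_assoc[OF dsum_biproduct[of A B] dsum_biproduct[of "dsum A B" R]
      dsum_biproduct[of B R]] dsum_biproduct[of A "dsum B R"]] assms
  by simp

lemma dsum_comm: "A \<in> Ob C \<Longrightarrow> B \<in> Ob C \<Longrightarrow> isomorphic C (dsum A B) (dsum B A)"
  using biproduct_unique[OF biproduct_swap[OF dsum_biproduct[of A B]] dsum_biproduct[of B A]] by simp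

lemma dsum_left_commute:
  assumes O: "A \<in> Ob C" "B \<in> Ob C" "R \<in> Ob C"
  shows "isomorphic C (dsum A (dsum B R)) (dsum B (dsum A R))"
proof -
  have "isomorphic C (dsum A (dsum B R)) (dsum (dsum A B) R)"
    using dsum_assoc[OF O] isomorphic_sym by blast
  also have "isomorphic C \<dots> (dsum (dsum B A) R)"
    using dsum_cong[OF dsum_comm[OF O(1,2)] isomorphic_refl[OF O(3)]] .
  also have "isomorphic C \<dots> (dsum B (dsum A R))" using dsum_assoc O by blast
  finally show ?thesis .
qed

lemma dsum_list_append:
  "set xs \<subseteq> Ob C \<Longrightarrow> set ys \<subseteq> Ob C \<Longrightarrow>
   isomorphic C (dsum_list (xs @ ys)) (dsum (dsum_list xs) (dsum_list ys))"
proof (induct xs)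
  case Nil
  then show ?case using dsum_zero_left by simp
next
  case (Cons x xs)
  then have O: "x \<in> Ob C" "dsum_list xs \<in> Ob C" "dsum_list ys \<in> Ob C" "set xs \<subseteq> Ob C" by auto
  have "isomorphic C (dsum_list ((x # xs) @ ys)) (dsum x (dsum (dsum_list xs) (dsum_list ys)))"
    using dsum_cong[OF isomorphic_refl[OF O(1)] Cons(1)[OF O(4) Cons(3)]] by simp
  also have "isomorphic C \<dots> (dsum (dsum x (dsum_list xs)) (dsum_list ys))"
    using isomorphic_sym[OF dsum_assoc[OF O(1-3)]] .
  finally show ?case by simp
qed

lemma dsum_list_append_cong:
  assumes "set xs \<subseteq> Ob C" "set ys \<subseteq> Ob C" "set xs' \<subseteq> Ob C" "set ys' \<subseteq> Ob C"
    and "isomorphic C (dsum_list xs) (dsum_list xs')" "isomorphic C (dsum_list ys) (dsum_list ys')"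
  shows "isomorphic C (dsum_list (xs @ ys)) (dsum_list (xs' @ ys'))"
proof -
  have "isomorphic C (dsum_list (xs @ ys)) (dsum (dsum_list xs) (dsum_list ys))"
    using dsum_list_append assms by blast
  also have "isomorphic C \<dots> (dsum (dsum_list xs') (dsum_list ys'))" using dsum_cong assms by blast
  also have "isomorphic C \<dots> (dsum_list (xs' @ ys'))" using dsum_list_append assms isomorphic_sym by blast
  finally show ?thesis .
qed

lemma dsum_list_move_to_front:
  "set xs \<subseteq> Ob C \<Longrightarrow> set ys \<subseteq> Ob C \<Longrightarrow> x \<in> Ob C \<Longrightarrow>
   isomorphic C (dsum_list (xs @ x # ys)) (dsum_list (x # xs @ ys))"
proof (induct xs)
  case Nil then show ?case using isomorphic_refl by simp
next
  case (Cons a xs)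
  then have O: "a \<in> Ob C" "x \<in> Ob C" "dsum_list (xs @ ys) \<in> Ob C" by auto
  have "isomorphic C (dsum_list ((a # xs) @ x # ys)) (dsum a (dsum_list (x # xs @ ys)))"
    using dsum_cong[OF isomorphic_refl[OF O(1)] Cons(1)] Cons by simp
  also have "isomorphic C (dsum a (dsum_list (x # xs @ ys))) (dsum x (dsum a (dsum_list (xs @ ys))))"
    using dsum_left_commute[OF O] by simp
  finally show ?case by simp
qed

lemma dsum_list_perm:
  "set xs \<subseteq> Ob C \<Longrightarrow> set ys \<subseteq> Ob C \<Longrightarrow> (\<forall>y. count_list xs y = count_list ys y) \<Longrightarrow>
   isomorphic C (dsum_list xs) (dsum_list ys)"
proof (induct xs arbitrary: ys)
  case Nil
  have "ys = []"
  proof (rule ccontr)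
    assume "ys \<noteq> []" then obtain y ys' where "ys = y # ys'" by (cases ys) auto
    then show False using Nil(3)[rule_format, of y] by simp
  qed
  then show ?case using isomorphic_refl by simp
next
  case (Cons x xs)
  have "count_list ys x > 0" using Cons(4)[rule_format, of x] by simp
  then have "x \<in> set ys" using count_list_0_iff[of ys x] by auto
  then obtain ys1 ys2 where ys: "ys = ys1 @ x # ys2" by (meson split_list)
  have O: "x \<in> Ob C" "set xs \<subseteq> Ob C" "set (ys1 @ ys2) \<subseteq> Ob C" "set ys1 \<subseteq> Ob C" "set ys2 \<subseteq> Ob C"
    using Cons ys by auto
  have "\<forall>y. count_list xs y = count_list (ys1 @ ys2) y"
  proof
    fix y show "count_list xs y = count_list (ys1 @ ys2) y" using Cons(4)[rule_format, of y] ys by (cases "y = x") auto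
  qed
  then have ih: "isomorphic C (dsum_list xs) (dsum_list (ys1 @ ys2))" using Cons(1) O by blast
  have "isomorphic C (dsum_list (x # xs)) (dsum_list (x # ys1 @ ys2))"
    using dsum_cong[OF isomorphic_refl[OF O(1)] ih] by simp
  also have "isomorphic C (dsum_list (x # ys1 @ ys2)) (dsum_list ys)"
    using isomorphic_sym[OF dsum_list_move_to_front[OF O(4,5,1)]] ys by simp
  finally show ?case .
qed

lemma dsum_list_pair:
  assumes b: "is_biproduct C A B S"
  shows "isomorphic C (dsum_list [A, B]) (dsum_list [S])"
proof -
  have O: "A \<in> Ob C" "B \<in> Ob C" "S \<in> Ob C" using biproduct_obs b by auto
  have "isomorphic C (dsum_list [A, B]) (dsum A B)"
    using dsum_cong[OF isomorphic_refl[OF O(1)] isomorphic_sym[OF dsum_zero_right[OF O(2)]]] by simp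
  also have "isomorphic C \<dots> S" using biproduct_unique[OF dsum_biproduct[OF O(1,2)] b] .
  also have "isomorphic C \<dots> (dsum_list [S])" using dsum_zero_right[OF O(3)] by simp
  finally show ?thesis .
qed

end

section \<open>The objects whose class lies in \<open>H\<close>\<close>

locale triangulated_gq_subspace = triangulated_category C for C :: "('o, 'm) tcat" +
  fixes H :: "('o \<Rightarrow> rat) set set"
  assumes H_subspace: "gq_subspace C (Ob C) H"
begin

definition Hrep :: "('o \<Rightarrow> rat) set" where
  "Hrep = {v \<in> fsupp (Ob C). groth_coset C (Ob C) v \<in> H}"

definition D :: "'o set" where
  "D = {X \<in> Ob C. delta X \<in> Hrep}"

\<comment> \<open>the kernels of the presentations of \<open>G(C)\<^sub>\<rat>\<close> and \<open>G(D)\<^sub>\<rat>\<close>\<close>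
abbreviation RC :: "('o \<Rightarrow> rat) set" where
  "RC \<equiv> qspan (groth_rels C (Ob C))"

abbreviation RD :: "('o \<Rightarrow> rat) set" where
  "RD \<equiv> qspan (groth_rels C D)"

lemma D_subset: "D \<subseteq> Ob C"
  unfolding D_def by auto

lemma Hrep_zero: "(\<lambda>y. 0) \<in> Hrep"
  using H_subspace fsupp_zero unfolding Hrep_def gq_subspace_def by auto

lemma Hrep_scale_add:
  assumes a: "a \<in> Hrep" and u: "u \<in> Hrep"
  shows "(\<lambda>y. c * a y + u y) \<in> Hrep"
proof -
  have af: "a \<in> fsupp (Ob C)" and uf: "u \<in> fsupp (Ob C)" using a u unfolding Hrep_def by auto
  have "gq_smult C (Ob C) c (groth_coset C (Ob C) a) \<in> H"
    using H_subspace a unfolding gq_subspace_def Hrep_def by auto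
  then have "groth_coset C (Ob C) (\<lambda>y. c * a y) \<in> H" using gq_smult_groth_coset[OF af, where C = C] by simp
  then have "gq_add C (Ob C) (groth_coset C (Ob C) (\<lambda>y. c * a y)) (groth_coset C (Ob C) u) \<in> H"
    using H_subspace u unfolding gq_subspace_def Hrep_def by auto
  then have "groth_coset C (Ob C) (\<lambda>y. c * a y + u y) \<in> H"
    using gq_add_groth_coset[OF fsupp_scale[OF af] uf, where C = C] by simp
  then show ?thesis unfolding Hrep_def using fsupp_scale_add[OF af uf] by auto
qed

lemma Hrep_add: "a \<in> Hrep \<Longrightarrow> u \<in> Hrep \<Longrightarrow> (\<lambda>y. a y + u y) \<in> Hrep"
  using Hrep_scale_add[of a u 1] by simp

lemma Hrep_scale: "a \<in> Hrep \<Longrightarrow> (\<lambda>y. c * a y) \<in> Hrep"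
  using Hrep_scale_add[of a "\<lambda>y. 0" c] Hrep_zero by simp

lemma qspan_subset_Hrep: "A \<subseteq> Hrep \<Longrightarrow> qspan A \<subseteq> Hrep"
proof
  fix v assume A: "A \<subseteq> Hrep" and v: "v \<in> qspan A"
  from v show "v \<in> Hrep"
    by (induct rule: qspan_induct) (use A Hrep_zero Hrep_scale_add in blast)+
qed

lemma RC_subset_Hrep: "RC \<subseteq> Hrep"
proof
  fix r assume r: "r \<in> RC"
  have "groth_coset C (Ob C) r = groth_coset C (Ob C) (\<lambda>y. 0)"
    by (rule groth_coset_eqI) (use r in simp)
  moreover have "groth_coset C (Ob C) (\<lambda>y. 0) \<in> H" using H_subspace unfolding gq_subspace_def by auto
  ultimately show "r \<in> Hrep" unfolding Hrep_def using qspan_groth_rels_fsupp r by auto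
qed

lemma D_memI: "X \<in> Ob C \<Longrightarrow> (\<lambda>y. delta X y - v y) \<in> RC \<Longrightarrow> v \<in> Hrep \<Longrightarrow> X \<in> D"
  unfolding D_def using Hrep_add[of "\<lambda>y. delta X y - v y" v] RC_subset_Hrep by auto

lemma RC_Tri: "(X, Y, Z, f, g, h) \<in> Tri C \<Longrightarrow> (\<lambda>y. delta Y y - delta X y - delta Z y) \<in> RC"
  using groth_rels_TriI[of X Y Z f g h C "Ob C"] Tri_arrs[of X Y Z f g h] qspan_base by blast

lemma RC_biproduct: "is_biproduct C A B S \<Longrightarrow> (\<lambda>y. delta S y - delta A y - delta B y) \<in> RC"
  using biproduct_Tri RC_Tri by blast

lemma RC_z0: "delta z0 \<in> RC"
  using qspan_neg[OF RC_Tri[OF Tri_idm[OF z0_ob]]] by simp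

lemma RC_shift: "X \<in> Ob C \<Longrightarrow> (\<lambda>y. delta X y + delta (ShO C X) y) \<in> RC"
  using qspan_diff[OF RC_z0 RC_Tri[OF Tri_rotate[OF Tri_idm]]] by simp

lemma biproduct_shift_in_D: "is_biproduct C U (ShO C U) S \<Longrightarrow> S \<in> D"
  using qspan_add[OF RC_biproduct RC_shift] biproduct_obs D_memI[of S "\<lambda>y. 0"] Hrep_zero
  by fastforce

lemma z0_in_D: "z0 \<in> D"
  using D_memI[of z0 "\<lambda>y. 0"] RC_z0 Hrep_zero by simp

lemma D_isomorphic:
  assumes X: "X \<in> D" and i: "isomorphic C X Y"
  shows "Y \<in> D"
proof -
  have O: "X \<in> Ob C" "Y \<in> Ob C" using isomorphic_obs i by auto
  have "(\<lambda>y. delta Y y - delta X y) \<in> RC"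
    using qspan_neg[OF qspan_base[OF groth_rels_isoI[OF i O]]] by simp
  moreover have "delta X \<in> Hrep" using X unfolding D_def by blast
  ultimately show ?thesis by (rule D_memI[OF O(2)])
qed

lemma D_biproduct:
  assumes A: "A \<in> D" and B: "B \<in> D" and b: "is_biproduct C A B S"
  shows "S \<in> D" and "(\<lambda>y. delta S y - delta A y - delta B y) \<in> groth_rels C D"
proof -
  show S: "S \<in> D"
  proof (rule D_memI)
    show "S \<in> Ob C" using biproduct_obs[OF b] by blast
    show "(\<lambda>y. delta S y - (delta A y + delta B y)) \<in> RC"
      using RC_biproduct[OF b] by (simp add: algebra_simps)
    show "(\<lambda>y. delta A y + delta B y) \<in> Hrep" using Hrep_add A B unfolding D_def by blast
  qed
  obtain i1 p2 where "(A, S, B, i1, p2, mzero C B (ShO C A)) \<in> Tri C" using biproduct_Tri[OF b] by blast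
  from groth_rels_TriI[OF this A S B]
  show "(\<lambda>y. delta S y - delta A y - delta B y) \<in> groth_rels C D" .
qed

lemma dense_D: "dense_subcategory C D"
  unfolding dense_subcategory_def triangulated_subcategory_def
proof (intro conjI ballI allI impI)
  show "D \<subseteq> Ob C" by (rule D_subset)
  show "D \<noteq> {}" using z0_in_D by blast
  show "Y \<in> D" if "X \<in> D" "isomorphic C X Y" for X Y using D_isomorphic that by blast
  show "ShO C X \<in> D" if X: "X \<in> D" for X
  proof (rule D_memI)
    show "(\<lambda>y. delta (ShO C X) y - (- delta X y)) \<in> RC"
      using RC_shift X D_subset by (auto simp: algebra_simps)
    show "(\<lambda>y. - delta X y) \<in> Hrep" using Hrep_scale[of "delta X" "-1"] X unfolding D_def by simp
  qed (use X D_subset in auto)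
  show "X \<in> D" if X: "X \<in> Ob C" "ShO C X \<in> D" for X
  proof (rule D_memI[OF X(1)])
    show "(\<lambda>y. delta X y - (- delta (ShO C X) y)) \<in> RC" using RC_shift[OF X(1)] by (simp add: algebra_simps)
    show "(\<lambda>y. - delta (ShO C X) y) \<in> Hrep"
      using Hrep_scale[of "delta (ShO C X)" "-1"] X unfolding D_def by simp
  qed
  show "Z \<in> D" if t: "(X, Y, Z, f, g, h) \<in> Tri C" and XY: "X \<in> D" "Y \<in> D" for X Y Z f g h
  proof (rule D_memI)
    show "(\<lambda>y. delta Z y - (delta Y y + (-1) * delta X y)) \<in> RC"
      using qspan_neg[OF RC_Tri[OF t]] by (simp add: algebra_simps)
    show "(\<lambda>y. delta Y y + (-1) * delta X y) \<in> Hrep"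
      using Hrep_scale_add[of "delta X" "delta Y" "-1"] XY unfolding D_def by simp
  qed (use Tri_arrs[OF t] in auto)
  show "\<exists>V \<in> Ob C. \<exists>S. is_biproduct C U V S \<and> S \<in> D" if U: "U \<in> Ob C" for U
    using biproduct_shift_in_D dsum_biproduct[of U "ShO C U"] U by (intro bexI[of _ "ShO C U"]) auto
qed

lemma RC_dsum_list: "set L \<subseteq> Ob C \<Longrightarrow> (\<lambda>y. delta (dsum_list L) y - count_vec L y) \<in> RC"
proof (induct L)
  case Nil
  then show ?case using RC_z0 by simp
next
  case (Cons x L)
  then have O: "x \<in> Ob C" "dsum_list L \<in> Ob C" "set L \<subseteq> Ob C" by auto
  from qspan_add[OF RC_biproduct[OF dsum_biproduct[OF O(1,2)]] Cons(1)[OF O(3)]]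
  show ?case by (simp add: algebra_simps)
qed

lemma fsupp_count_vec_difference:
  assumes "v \<in> fsupp (Ob C)"
  shows "\<exists>n > 0. \<exists>L1 L2. (set L1 \<subseteq> Ob C \<and> set L2 \<subseteq> Ob C) \<and>
           (\<forall>y. of_nat n * v y = count_vec L1 y - count_vec L2 y)"
proof (rule qspan_count_vec_difference)
  show "v \<in> qspan {delta x | x. x \<in> Ob C}"
    by (rule fsupp_in_qspanI[OF assms]) (auto intro: qspan_base)
  show "\<exists>M1 M2. (set M1 \<subseteq> Ob C \<and> set M2 \<subseteq> Ob C) \<and> a = (\<lambda>y. count_vec M1 y - count_vec M2 y)"
    if a: "a \<in> {delta x | x. x \<in> Ob C}" for a
  proof -
    obtain x where "x \<in> Ob C" "a = delta x" using a by blast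
    then show ?thesis by (intro exI[of _ "[x]"] exI[of _ "[]"]) auto
  qed
qed auto

lemma Hrep_in_D_span:
  assumes vH: "v \<in> Hrep"
  shows "\<exists>w \<in> fsupp D. (\<lambda>y. w y - v y) \<in> RC"
proof -
  obtain n L1 L2 where n: "n > 0" and L: "set L1 \<subseteq> Ob C" "set L2 \<subseteq> Ob C"
    and v: "\<And>y. of_nat n * v y = count_vec L1 y - count_vec L2 y"
    using fsupp_count_vec_difference vH unfolding Hrep_def by blast
  have O: "dsum_list L1 \<in> Ob C" "dsum_list L2 \<in> Ob C" using L by auto
  \<comment> \<open>\<open>[L1] - [L2] = [\<Oplus>L1 \<oplus> (\<Oplus>L2)[1]]\<close> in \<open>G(C)\<close>\<close>
  define Y where "Y = dsum (dsum_list L1) (ShO C (dsum_list L2))"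
  have "(\<lambda>y. (delta Y y - delta (dsum_list L1) y - delta (ShO C (dsum_list L2)) y)
      + (delta (dsum_list L1) y - count_vec L1 y)
      + (delta (dsum_list L2) y + delta (ShO C (dsum_list L2)) y)
      - (delta (dsum_list L2) y - count_vec L2 y)) \<in> RC"
    unfolding Y_def
    by (intro qspan_add qspan_diff RC_biproduct dsum_biproduct RC_dsum_list RC_shift) (use O L in auto)
  then have r: "(\<lambda>y. delta Y y - of_nat n * v y) \<in> RC" by (simp add: v algebra_simps)
  have YD: "Y \<in> D"
    using D_memI[OF _ r Hrep_scale[OF vH]] O unfolding Y_def by simp
  define w where "w y = (1 / of_nat n) * delta Y y" for y
  have "w \<in> fsupp D" unfolding w_def using fsupp_scale[OF fsupp_delta[OF YD]] .
  moreover have "(\<lambda>y. w y - v y) \<in> RC"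
    using qspan_scale[OF r, of "1 / of_nat n"] n unfolding w_def by (simp add: field_simps)
  ultimately show ?thesis by blast
qed

lemma gq_incl_image: "gq_incl C D ` GQ C D = H"
proof
  show "gq_incl C D ` GQ C D \<subseteq> H"
  proof
    fix K assume "K \<in> gq_incl C D ` GQ C D"
    then obtain v where v: "v \<in> fsupp D" and K: "K = groth_coset C (Ob C) v"
      unfolding GQ_def using gq_incl_groth_coset[OF D_subset] by auto
    have "v \<in> qspan Hrep" by (rule fsupp_in_qspanI[OF v]) (auto intro: qspan_base simp: D_def)
    then have "v \<in> Hrep" using qspan_subset_Hrep[of Hrep] by blast
    then show "K \<in> H" using K unfolding Hrep_def by simp
  qed
next
  show "H \<subseteq> gq_incl C D ` GQ C D"
  proof
    fix K assume KH: "K \<in> H"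
    then have "K \<in> GQ C (Ob C)" using H_subspace unfolding gq_subspace_def by blast
    then obtain v where v: "v \<in> fsupp (Ob C)" and K: "K = groth_coset C (Ob C) v" unfolding GQ_def by blast
    have "v \<in> Hrep" unfolding Hrep_def using v K KH by simp
    then obtain w where w: "w \<in> fsupp D" and r: "(\<lambda>y. w y - v y) \<in> RC" using Hrep_in_D_span by blast
    have "gq_incl C D (groth_coset C D w) = K"
      unfolding K gq_incl_groth_coset[OF D_subset w] using groth_coset_eqI[OF r] .
    then show "K \<in> gq_incl C D ` GQ C D" unfolding GQ_def using w by blast
  qed
qed

lemma RD_z0: "delta z0 \<in> RD"
  using qspan_neg[OF qspan_base[OF groth_rels_TriI[OF Tri_idm[OF z0_ob] z0_in_D z0_in_D z0_in_D]]]
  by simp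

lemma D_dsum_list:
  "set L \<subseteq> D \<Longrightarrow> dsum_list L \<in> D \<and> (\<lambda>y. delta (dsum_list L) y - count_vec L y) \<in> RD"
proof (induct L)
  case Nil
  then show ?case using RD_z0 z0_in_D by simp
next
  case (Cons x L)
  then have XD: "x \<in> D" "dsum_list L \<in> D" "(\<lambda>y. delta (dsum_list L) y - count_vec L y) \<in> RD" by auto
  then have b: "is_biproduct C x (dsum_list L) (dsum x (dsum_list L))"
    using dsum_biproduct D_subset by blast
  from qspan_add[OF qspan_base[OF D_biproduct(2)[OF XD(1,2) b]] XD(3)]
  show ?case using D_biproduct(1)[OF XD(1,2) b] by (simp add: algebra_simps)
qed

lemma RD_biproduct_shift:
  assumes U: "U \<in> Ob C" and E: "is_biproduct C (ShO C U) U E"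
  shows "delta E \<in> RD"
proof -
  let ?U1 = "ShO C U" and ?U2 = "ShO C (ShO C U)"
  have O: "?U1 \<in> Ob C" "?U2 \<in> Ob C" using U by auto
  \<comment> \<open>enlarge the triangle \<open>U[1] \<rightarrow> U[1] \<rightarrow> 0\<close> to one whose three terms lie in \<open>D\<close>, the first being \<open>E\<close>\<close>
  obtain f' Q g' h' where t1: "(E, ?U1, Q, f', g', h') \<in> Tri C" and Q: "is_biproduct C ?U1 z0 Q"
    using Tri_biproduct_first[OF Tri_idm[OF O(1)] E] by blast
  let ?S = "dsum ?U1 ?U2"
  have S: "is_biproduct C ?U1 ?U2 ?S" using dsum_biproduct O by blast
  obtain f'' Q' g'' h'' where t2: "(E, ?S, Q', f'', g'', h'') \<in> Tri C" and Q': "is_biproduct C Q ?U2 Q'"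
    using Tri_biproduct_mid[OF t1 S] by blast
  have ED: "E \<in> D" using biproduct_shift_in_D[OF biproduct_swap[OF E]] .
  have SD: "?S \<in> D" using biproduct_shift_in_D[OF S] .
  have iso: "isomorphic C ?S Q'"
    using biproduct_cong[OF biproduct_zero[OF Q zero_object_z0] isomorphic_refl[OF O(2)] S Q'] .
  have QD: "Q' \<in> D" using D_isomorphic[OF SD iso] .
  from qspan_diff[OF qspan_base[OF groth_rels_isoI[OF iso SD QD]] qspan_base[OF groth_rels_TriI[OF t2 ED SD QD]]]
  show ?thesis by simp
qed

definition biproduct_rels :: "('o \<Rightarrow> rat) set" where
  "biproduct_rels = {(\<lambda>y. delta A y + delta B y - delta S y) | A B S. is_biproduct C A B S}"

abbreviation RDB :: "('o \<Rightarrow> rat) set" where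
  "RDB \<equiv> qspan (groth_rels C D \<union> biproduct_rels)"

lemma biproduct_rel_in_RDB: "is_biproduct C A B S \<Longrightarrow> (\<lambda>y. delta A y + delta B y - delta S y) \<in> RDB"
  unfolding biproduct_rels_def by (rule qspan_base) blast

lemma groth_rels_D_in_RDB: "v \<in> groth_rels C D \<Longrightarrow> v \<in> RDB"
  by (rule qspan_base) blast

lemma RD_subset_RDB: "RD \<subseteq> RDB"
  by (rule qspan_mono) blast

lemma Tri_rel_in_RDB:
  assumes t: "(X, Y, Z, f, g, h) \<in> Tri C"
  shows "(\<lambda>y. delta Y y - delta X y - delta Z y) \<in> RDB"
proof -
  note At = Tri_arrs[OF t]
  let ?X1 = "ShO C X" and ?X2 = "ShO C (ShO C X)"
  \<comment> \<open>add \<open>X[1]\<close> to the first term and \<open>Q[1]\<close> to the second, where \<open>Q = X[2] \<oplus> Z\<close>: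
    all three terms of the resulting triangle then have the form \<open>W \<oplus> W[1]\<close>, so lie in \<open>D\<close>\<close>
  let ?S1 = "dsum X ?X1"
  have S1: "is_biproduct C X ?X1 ?S1" using dsum_biproduct At by simp
  obtain f1 Q g1 h1 where t1: "(?S1, Y, Q, f1, g1, h1) \<in> Tri C" and Q: "is_biproduct C ?X2 Z Q"
    using Tri_biproduct_first[OF t S1] by blast
  have QO: "Q \<in> Ob C" using biproduct_obs Q by blast
  let ?Q1 = "ShO C Q"
  let ?S2 = "dsum Y ?Q1"
  have S2: "is_biproduct C Y ?Q1 ?S2" using dsum_biproduct At QO by simp
  obtain f2 Q2 g2 h2 where t2: "(?S1, ?S2, Q2, f2, g2, h2) \<in> Tri C" and Q2: "is_biproduct C Q ?Q1 Q2"
    using Tri_biproduct_mid[OF t1 S2] by blast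
  let ?E = "dsum ?X2 ?X1"
  have E: "is_biproduct C ?X2 ?X1 ?E" using dsum_biproduct At by simp
  have S1D: "?S1 \<in> D" using biproduct_shift_in_D[OF S1] .
  have Q2D: "Q2 \<in> D" using biproduct_shift_in_D[OF Q2] .
  have S2D: "?S2 \<in> D"
  proof (rule D_memI)
    show "?S2 \<in> Ob C" using At QO by simp
    show "(\<lambda>y. delta ?S2 y - (delta ?S1 y + delta Q2 y)) \<in> RC"
      using RC_Tri[OF t2] by (simp add: algebra_simps)
    show "(\<lambda>y. delta ?S1 y + delta Q2 y) \<in> Hrep" using Hrep_add S1D Q2D unfolding D_def by blast
  qed
  have r: "(\<lambda>y. delta ?S2 y - delta ?S1 y - delta Q2 y) \<in> RDB"
    using groth_rels_D_in_RDB groth_rels_TriI[OF t2 S1D S2D Q2D] by blast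
  have e: "delta ?E \<in> RDB" using RD_subset_RDB RD_biproduct_shift[OF _ E] At by auto
  have "(\<lambda>y. (delta ?S2 y - delta ?S1 y - delta Q2 y) + (delta Y y + delta ?Q1 y - delta ?S2 y)
      - (delta X y + delta ?X1 y - delta ?S1 y) - (delta Q y + delta ?Q1 y - delta Q2 y)
      - (delta ?X2 y + delta Z y - delta Q y) + (delta ?X2 y + delta ?X1 y - delta ?E y)
      + delta ?E y) \<in> RDB"
    using qspan_add[OF qspan_add[OF qspan_diff[OF qspan_diff[OF qspan_diff[OF
          qspan_add[OF r biproduct_rel_in_RDB[OF S2]] biproduct_rel_in_RDB[OF S1]]
          biproduct_rel_in_RDB[OF Q2]] biproduct_rel_in_RDB[OF Q]] biproduct_rel_in_RDB[OF E]] e] .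
  then show ?thesis by (simp add: algebra_simps)
qed

lemma iso_rel_in_RDB:
  assumes i: "isomorphic C X X'"
  shows "(\<lambda>y. delta X y - delta X' y) \<in> RDB"
proof -
  have O: "X \<in> Ob C" "X' \<in> Ob C" using isomorphic_obs i by auto
  let ?X1 = "ShO C X"
  let ?E = "dsum X ?X1" and ?E' = "dsum X' ?X1"
  have E: "is_biproduct C X ?X1 ?E" and E': "is_biproduct C X' ?X1 ?E'" using dsum_biproduct O by auto
  have ii: "isomorphic C ?E ?E'" using biproduct_cong[OF i isomorphic_refl E E'] O by simp
  have ED: "?E \<in> D" using biproduct_shift_in_D[OF E] .
  have E'D: "?E' \<in> D" using D_isomorphic[OF ED ii] .
  have "(\<lambda>y. (delta ?E y - delta ?E' y) + (delta X y + delta ?X1 y - delta ?E y)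
       - (delta X' y + delta ?X1 y - delta ?E' y)) \<in> RDB"
    using qspan_diff[OF qspan_add[OF groth_rels_D_in_RDB[OF groth_rels_isoI[OF ii ED E'D]]
        biproduct_rel_in_RDB[OF E]] biproduct_rel_in_RDB[OF E']] .
  then show ?thesis by (simp add: algebra_simps)
qed

lemma RC_subset_RDB: "RC \<subseteq> RDB"
proof (rule qspan_subset, rule subsetI)
  fix r assume "r \<in> groth_rels C (Ob C)"
  then have "(\<exists>X Y Z f g h. r = (\<lambda>y. delta Y y - delta X y - delta Z y) \<and> (X, Y, Z, f, g, h) \<in> Tri C)
      \<or> (\<exists>X X'. r = (\<lambda>y. delta X y - delta X' y) \<and> isomorphic C X X')"
    unfolding groth_rels_def by blast
  then show "r \<in> RDB" using Tri_rel_in_RDB iso_rel_in_RDB by blast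
qed

lemma qspan_biproduct_rels_stable:
  assumes "u \<in> qspan biproduct_rels"
  shows "\<exists>n > 0. \<exists>L1 L2. (set L1 \<subseteq> Ob C \<and> set L2 \<subseteq> Ob C \<and> isomorphic C (dsum_list L1) (dsum_list L2)) \<and>
           (\<forall>y. of_nat n * u y = count_vec L1 y - count_vec L2 y)"
proof (rule qspan_count_vec_difference[OF assms])
  show "\<exists>M1 M2. (set M1 \<subseteq> Ob C \<and> set M2 \<subseteq> Ob C \<and> isomorphic C (dsum_list M1) (dsum_list M2)) \<and>
      a = (\<lambda>y. count_vec M1 y - count_vec M2 y)" if a: "a \<in> biproduct_rels" for a
  proof -
    obtain A B S where b: "is_biproduct C A B S" and "a = (\<lambda>y. delta A y + delta B y - delta S y)"
      using a unfolding biproduct_rels_def by blast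
    then show ?thesis
      using dsum_list_pair[OF b] biproduct_obs[OF b] by (intro exI[of _ "[A, B]"] exI[of _ "[S]"]) auto
  qed
qed (auto intro: isomorphic_refl isomorphic_sym dsum_list_append_cong)

lemma stably_isomorphic_in_RD:
  assumes P: "set P \<subseteq> D" and Q: "set Q \<subseteq> D" and K: "set K \<subseteq> Ob C"
    and iso: "isomorphic C (dsum_list (P @ K)) (dsum_list (Q @ K))"
  shows "(\<lambda>y. count_vec P y - count_vec Q y) \<in> RD"
proof -
  \<comment> \<open>add \<open>W[1]\<close> for \<open>W = \<Oplus>K\<close> to both sides, so that the common summand \<open>W \<oplus> W[1]\<close> lies in \<open>D\<close>\<close>
  define W where "W = dsum_list K"
  define F where "F = K @ [ShO C W]"
  have PO: "set P \<subseteq> Ob C" "set Q \<subseteq> Ob C" using P Q D_subset by auto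
  have WO: "W \<in> Ob C" and FO: "set F \<subseteq> Ob C" unfolding F_def W_def using K by auto
  have "isomorphic C (dsum_list ((P @ K) @ [ShO C W])) (dsum_list ((Q @ K) @ [ShO C W]))"
    by (rule dsum_list_append_cong[OF _ _ _ _ iso isomorphic_refl]) (use PO K WO in auto)
  then have iF: "isomorphic C (dsum_list (P @ F)) (dsum_list (Q @ F))" unfolding F_def by simp
  have "isomorphic C (dsum W (ShO C W)) (dsum (dsum_list K) (dsum_list [ShO C W]))"
    using dsum_cong[OF isomorphic_refl[OF WO] dsum_zero_right[of "ShO C W"]] WO unfolding W_def by simp
  also have "isomorphic C \<dots> (dsum_list F)"
    unfolding F_def using isomorphic_sym[OF dsum_list_append[of K "[ShO C W]"]] K WO by simp
  finally have FD: "dsum_list F \<in> D"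
    using D_isomorphic biproduct_shift_in_D[OF dsum_biproduct[OF WO ShO_ob[OF WO]]] by blast
  have r: "dsum_list (R @ F) \<in> D \<and>
      (\<lambda>y. delta (dsum_list (R @ F)) y - count_vec R y - delta (dsum_list F) y) \<in> RD"
    if R: "set R \<subseteq> D" for R
  proof -
    obtain RD': "dsum_list R \<in> D" and cR: "(\<lambda>y. delta (dsum_list R) y - count_vec R y) \<in> RD"
      using D_dsum_list[OF R] by blast
    let ?B = "dsum (dsum_list R) (dsum_list F)"
    have RO: "set R \<subseteq> Ob C" using R D_subset by auto
    have b: "is_biproduct C (dsum_list R) (dsum_list F) ?B" using dsum_biproduct RO FO by simp
    have j: "isomorphic C ?B (dsum_list (R @ F))" using isomorphic_sym[OF dsum_list_append[OF RO FO]] .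
    have BD: "?B \<in> D" using D_biproduct(1)[OF RD' FD b] .
    have XD: "dsum_list (R @ F) \<in> D" using D_isomorphic[OF BD j] .
    from qspan_add[OF qspan_diff[OF qspan_base[OF D_biproduct(2)[OF RD' FD b]]
        qspan_base[OF groth_rels_isoI[OF j BD XD]]] cR]
    show ?thesis using XD by (simp add: algebra_simps)
  qed
  have "(\<lambda>y. delta (dsum_list (P @ F)) y - delta (dsum_list (Q @ F)) y) \<in> RD"
    using qspan_base[OF groth_rels_isoI[OF iF]] r[OF P] r[OF Q] by blast
  from qspan_diff[OF this qspan_diff[OF conjunct2[OF r[OF P]] conjunct2[OF r[OF Q]]]]
  show ?thesis by (simp add: algebra_simps)
qed

lemma stable_difference_in_RD:
  assumes uD: "u \<in> fsupp D" and n: "n > 0" and L: "set L1 \<subseteq> Ob C" "set L2 \<subseteq> Ob C"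
    and iso: "isomorphic C (dsum_list L1) (dsum_list L2)"
    and u: "\<And>y. of_nat n * u y = count_vec L1 y - count_vec L2 y"
  shows "u \<in> RD"
proof -
  define P where "P = filter (\<lambda>x. x \<in> D) L1"
  define Q where "Q = filter (\<lambda>x. x \<in> D) L2"
  define K where "K = filter (\<lambda>x. x \<notin> D) L1"
  have sets: "set P \<subseteq> D" "set Q \<subseteq> D" "set K \<subseteq> Ob C" "set P \<subseteq> Ob C" "set Q \<subseteq> Ob C"
    unfolding P_def Q_def K_def using L D_subset by auto
  \<comment> \<open>outside \<open>D\<close> the vector \<open>u\<close> vanishes, so \<open>L1\<close> and \<open>L2\<close> share their part outside \<open>D\<close>\<close>
  have K2: "count_list (filter (\<lambda>x. x \<notin> D) L2) y = count_list K y" for y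
  proof (cases "y \<in> D")
    case False
    then have "u y = 0" using uD unfolding fsupp_def by auto
    then have "count_vec L1 y = count_vec L2 y" using u[of y] by simp
    then show ?thesis unfolding K_def count_vec_def using False by (simp add: count_list_filter)
  qed (simp add: K_def count_list_filter)
  have cP: "count_list (P @ K) y = count_list L1 y" for y
    unfolding P_def K_def by (simp add: count_list_filter)
  have cQ: "count_list (Q @ K) y = count_list L2 y" for y
    using K2[of y] unfolding Q_def by (simp add: count_list_filter split: if_splits)
  have "isomorphic C (dsum_list (P @ K)) (dsum_list L1)" using dsum_list_perm[of "P @ K" L1] sets L cP by auto
  also have "isomorphic C (dsum_list L1) (dsum_list L2)" using iso .
  also have "isomorphic C (dsum_list L2) (dsum_list (Q @ K))" using dsum_list_perm[of L2 "Q @ K"] sets L cQ by auto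
  finally have "(\<lambda>y. count_vec P y - count_vec Q y) \<in> RD" using stably_isomorphic_in_RD sets by blast
  from qspan_scale[OF this, of "1 / of_nat n"]
  have "(\<lambda>y. (1 / of_nat n) * (count_vec (P @ K) y - count_vec (Q @ K) y)) \<in> RD" by simp
  moreover have "count_vec (P @ K) y - count_vec (Q @ K) y = of_nat n * u y" for y
    using u[of y] cP[of y] cQ[of y] unfolding count_vec_def by simp
  ultimately show ?thesis using n by simp
qed

lemma gq_incl_inj: "inj_on (gq_incl C D) (GQ C D)"
proof (rule inj_onI)
  fix K1 K2 assume "K1 \<in> GQ C D" "K2 \<in> GQ C D" and e: "gq_incl C D K1 = gq_incl C D K2"
  then obtain v w where v: "v \<in> fsupp D" "K1 = groth_coset C D v" and w: "w \<in> fsupp D" "K2 = groth_coset C D w"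
    unfolding GQ_def by blast
  have "groth_coset C (Ob C) v = groth_coset C (Ob C) w"
    using e gq_incl_groth_coset[OF D_subset v(1)] gq_incl_groth_coset[OF D_subset w(1)] v w by simp
  then have "(\<lambda>y. v y - w y) \<in> RDB"
    using groth_coset_eqD fsupp_mono[OF D_subset] v(1) RC_subset_RDB by blast
  then obtain d s where d: "d \<in> RD" and s: "s \<in> qspan biproduct_rels"
    and vw: "(\<lambda>y. v y - w y) = (\<lambda>y. d y + s y)"
    using qspan_Un by blast
  have "(\<lambda>y. (v y - w y) - d y) \<in> fsupp D"
    using fsupp_diff[OF fsupp_diff[OF v(1) w(1)] qspan_groth_rels_fsupp[THEN subsetD, OF d]] .
  moreover have "(\<lambda>y. (v y - w y) - d y) = s" using vw by (auto simp: fun_eq_iff)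
  ultimately have "s \<in> RD"
    using qspan_biproduct_rels_stable[OF s] stable_difference_in_RD by auto
  then have "(\<lambda>y. v y - w y) \<in> RD" using qspan_add[OF d] vw by simp
  then show "K1 = K2" using v w groth_coset_eqI by blast
qed

end

theorem lemma3p3:
  fixes C :: "('o, 'm) tcat" and H :: "('o \<Rightarrow> rat) set set"
  assumes "triangulated C"
    and "gq_subspace C (Ob C) H"
  shows "\<exists>D. dense_subcategory C D \<and>
           inj_on (gq_incl C D) (GQ C D) \<and>
           gq_incl C D ` GQ C D = H"
proof -
  interpret triangulated_gq_subspace C H
    by (rule triangulated_gq_subspace.intro[OF triangulated_category.intro
          triangulated_gq_subspace_axioms.intro]) (rule assms)+
  show ?thesis using dense_D gq_incl_inj gq_incl_image by blast
qed

end
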